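(* Let $T$ be a complete theory with monster model $\mathcal{U}$, $\mu\in\mathfrak{M}_x(\mathcal{U})$, $\nu\in\mathfrak{M}_y(\mathcal{U})$, and $f:\mathcal{U}^y\to\mathcal{U}^z$ a definable map (with parameters). If $\mu\geq_{\mathbb{E}}\nu$, then $\mu\geq_{\mathbb{E}}f(\nu)$.
   Context: For $C\subseteq\mathcal{U}$, $\mathcal{L}_x(C)$ is the Boolean algebra of formulas in $x$ with parameters from $C$ modulo $T$, embedded in $\mathcal{L}_{xy}(C)$ via $\varphi(x)\mapsto\varphi(x)\wedge y=y$; $\mathfrak{M}_x(C)$ is the set of finitely additive probability measures on $\mathcal{L}_x(C)$. For $\omega\in\mathfrak{M}_{xy}(C)$, $\pi_x(\omega)(\varphi(x))=\omega(\varphi(x)\wedge y=y)$ (similarly $\pi_y$); $\omega|_D$ is restriction. The push-forward is $f(\nu)(\psi(z))=\nu(\psi(f(y)))$. For small $A$, $\mu\geq_{\mathbb{E},A}\nu$ means there is $\lambda\in\mathfrak{M}_{xy}(A)$ with $\pi_x(\lambda)=\mu|_A$ such that every $\omega\in\mathfrak{M}_{xy}(\mathcal{U})$ with $\omega|_A=\lambda$ and $\pi_x(\omega)=\mu$ satisfies $\pi_y(\omega)=\nu$; $\mu\geq_{\mathbb{E}}\nu$ means this holds for some small $A$ (defined analogously for other variable tuples). *)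

theory Defs
  imports Main "HOL.Real"
begin

text \<open>Terms and formulas of a first-order language with function symbols 'f and
relation symbols 'r (each symbol may be applied to argument lists of any length).
Variables are natural numbers.\<close>

datatype 'f trm = Var nat | Fn 'f "'f trm list"

datatype ('f, 'r) form = Bot | Equ "'f trm" "'f trm" | Rl 'r "'f trm list"
  | Neg "('f, 'r) form" | Conj "('f, 'r) form" "('f, 'r) form" | Exi nat "('f, 'r) form"

fun evt :: "('f \<Rightarrow> 'u list \<Rightarrow> 'u) \<Rightarrow> (nat \<Rightarrow> 'u) \<Rightarrow> 'f trm \<Rightarrow> 'u" where
  "evt F e (Var i) = e i"
| "evt F e (Fn g ts) = F g (map (evt F e) ts)"

fun sat :: "('f \<Rightarrow> 'u list \<Rightarrow> 'u) \<Rightarrow> ('r \<Rightarrow> 'u list \<Rightarrow> bool) \<Rightarrow> (nat \<Rightarrow> 'u)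
    \<Rightarrow> ('f, 'r) form \<Rightarrow> bool" where
  "sat F R e Bot = False"
| "sat F R e (Equ s t) = (evt F e s = evt F e t)"
| "sat F R e (Rl r ts) = R r (map (evt F e) ts)"
| "sat F R e (Neg p) = (\<not> sat F R e p)"
| "sat F R e (Conj p q) = (sat F R e p \<and> sat F R e q)"
| "sat F R e (Exi i p) = (\<exists>a. sat F R (e(i := a)) p)"

fun fvt :: "'f trm \<Rightarrow> nat set" where
  "fvt (Var i) = {i}"
| "fvt (Fn g ts) = \<Union> (set (map fvt ts))"

fun fv :: "('f, 'r) form \<Rightarrow> nat set" where
  "fv Bot = {}"
| "fv (Equ s t) = fvt s \<union> fvt t"
| "fv (Rl r ts) = \<Union> (set (map fvt ts))"
| "fv (Neg p) = fv p"
| "fv (Conj p q) = fv p \<union> fv q"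
| "fv (Exi i p) = fv p - {i}"

text \<open>The structure U has universe the type 'u (= the monster model).
An n-tuple of variables x is represented by tuples (lists) of length n; the
formula phi(x, c) with parameters c = ps from C defines the set of n-tuples v
with U |= phi(v, ps). Since T = Th(U) is complete, formulas with parameters in C
modulo T correspond exactly to these C-definable sets.\<close>

definition defsets :: "('f \<Rightarrow> 'u list \<Rightarrow> 'u) \<Rightarrow> ('r \<Rightarrow> 'u list \<Rightarrow> bool) \<Rightarrow> nat
    \<Rightarrow> 'u set \<Rightarrow> 'u list set set" where
  "defsets F R n C = {D. \<exists>(\<phi> :: ('f,'r) form) ps. set ps \<subseteq> C \<and> fv \<phi> \<subseteq> {..<n + length ps} \<and>
      D = {v. length v = n \<and> sat F R (\<lambda>i. (v @ ps) ! i) \<phi>}}"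

text \<open>Keisler measures on L_n(C): finitely additive probability measures on the
Boolean algebra of C-definable subsets of U^n (normalised to 0 outside it).\<close>

definition keisler :: "('f \<Rightarrow> 'u list \<Rightarrow> 'u) \<Rightarrow> ('r \<Rightarrow> 'u list \<Rightarrow> bool) \<Rightarrow> nat
    \<Rightarrow> 'u set \<Rightarrow> ('u list set \<Rightarrow> real) \<Rightarrow> bool" where
  "keisler F R n C m \<longleftrightarrow>
     (\<forall>D \<in> defsets F R n C. 0 \<le> m D) \<and>
     m {v. length v = n} = 1 \<and>
     (\<forall>D \<in> defsets F R n C. \<forall>E \<in> defsets F R n C. D \<inter> E = {} \<longrightarrow> m (D \<union> E) = m D + m E) \<and>
     (\<forall>D. D \<notin> defsets F R n C \<longrightarrow> m D = 0)"

definition restr :: "('f \<Rightarrow> 'u list \<Rightarrow> 'u) \<Rightarrow> ('r \<Rightarrow> 'u list \<Rightarrow> bool) \<Rightarrow> nat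
    \<Rightarrow> 'u set \<Rightarrow> ('u list set \<Rightarrow> real) \<Rightarrow> ('u list set \<Rightarrow> real)" where
  "restr F R n A m = (\<lambda>D. if D \<in> defsets F R n A then m D else 0)"

definition proj_x :: "('f \<Rightarrow> 'u list \<Rightarrow> 'u) \<Rightarrow> ('r \<Rightarrow> 'u list \<Rightarrow> bool) \<Rightarrow> nat \<Rightarrow> nat
    \<Rightarrow> 'u set \<Rightarrow> ('u list set \<Rightarrow> real) \<Rightarrow> ('u list set \<Rightarrow> real)" where
  "proj_x F R n k C \<omega> = (\<lambda>D. if D \<in> defsets F R n C
      then \<omega> {v @ w | v w. v \<in> D \<and> length w = k} else 0)"

definition proj_y :: "('f \<Rightarrow> 'u list \<Rightarrow> 'u) \<Rightarrow> ('r \<Rightarrow> 'u list \<Rightarrow> bool) \<Rightarrow> nat \<Rightarrow> nat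
    \<Rightarrow> 'u set \<Rightarrow> ('u list set \<Rightarrow> real) \<Rightarrow> ('u list set \<Rightarrow> real)" where
  "proj_y F R n k C \<omega> = (\<lambda>E. if E \<in> defsets F R k C
      then \<omega> {v @ w | v w. length v = n \<and> w \<in> E} else 0)"

definition definable_map :: "('f \<Rightarrow> 'u list \<Rightarrow> 'u) \<Rightarrow> ('r \<Rightarrow> 'u list \<Rightarrow> bool) \<Rightarrow> nat \<Rightarrow> nat
    \<Rightarrow> ('u list \<Rightarrow> 'u list) \<Rightarrow> bool" where
  "definable_map F R k m f \<longleftrightarrow>
     (\<forall>v. length v = k \<longrightarrow> length (f v) = m) \<and>
     {v @ w | v w. length v = k \<and> w = f v} \<in> defsets F R (k + m) UNIV"

definition push :: "('f \<Rightarrow> 'u list \<Rightarrow> 'u) \<Rightarrow> ('r \<Rightarrow> 'u list \<Rightarrow> bool) \<Rightarrow> nat \<Rightarrow> nat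
    \<Rightarrow> ('u list \<Rightarrow> 'u list) \<Rightarrow> ('u list set \<Rightarrow> real) \<Rightarrow> ('u list set \<Rightarrow> real)" where
  "push F R k m f \<nu> = (\<lambda>E. if E \<in> defsets F R m UNIV
      then \<nu> {w. length w = k \<and> f w \<in> E} else 0)"

text \<open>A set is small if its cardinality is strictly below |K| (kappa = |K|).\<close>

definition small :: "'k set \<Rightarrow> 'a set \<Rightarrow> bool" where
  "small K A \<longleftrightarrow> \<not> (\<exists>g. inj_on g K \<and> g ` K \<subseteq> A)"

definition saturated :: "'k set \<Rightarrow> ('f \<Rightarrow> 'u list \<Rightarrow> 'u) \<Rightarrow> ('r \<Rightarrow> 'u list \<Rightarrow> bool) \<Rightarrow> bool" where
  "saturated K F R \<longleftrightarrow> (\<forall>A P. small K A \<and> P \<subseteq> defsets F R 1 A \<and>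
      (\<forall>Q. Q \<subseteq> P \<and> finite Q \<longrightarrow> (\<exists>v. length v = 1 \<and> (\<forall>D\<in>Q. v \<in> D))) \<longrightarrow>
      (\<exists>v. length v = 1 \<and> (\<forall>D\<in>P. v \<in> D)))"

definition elem_map :: "('f \<Rightarrow> 'u list \<Rightarrow> 'u) \<Rightarrow> ('r \<Rightarrow> 'u list \<Rightarrow> bool) \<Rightarrow> 'u set
    \<Rightarrow> ('u \<Rightarrow> 'u) \<Rightarrow> bool" where
  "elem_map F R A g \<longleftrightarrow> (\<forall>(\<phi> :: ('f,'r) form) ps. set ps \<subseteq> A \<and> fv \<phi> \<subseteq> {..<length ps} \<longrightarrow>
      (sat F R (\<lambda>i. ps ! i) \<phi> \<longleftrightarrow> sat F R (\<lambda>i. map g ps ! i) \<phi>))"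

definition automorph :: "('f \<Rightarrow> 'u list \<Rightarrow> 'u) \<Rightarrow> ('r \<Rightarrow> 'u list \<Rightarrow> bool) \<Rightarrow> ('u \<Rightarrow> 'u) \<Rightarrow> bool" where
  "automorph F R \<sigma> \<longleftrightarrow> bij \<sigma> \<and> (\<forall>g us. \<sigma> (F g us) = F g (map \<sigma> us)) \<and>
      (\<forall>r us. R r (map \<sigma> us) = R r us)"

definition homogeneous :: "'k set \<Rightarrow> ('f \<Rightarrow> 'u list \<Rightarrow> 'u) \<Rightarrow> ('r \<Rightarrow> 'u list \<Rightarrow> bool) \<Rightarrow> bool" where
  "homogeneous K F R \<longleftrightarrow> (\<forall>A g. small K A \<and> elem_map F R A g \<longrightarrow>
      (\<exists>\<sigma>. automorph F R \<sigma> \<and> (\<forall>a\<in>A. \<sigma> a = g a)))"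

definition monster :: "'k set \<Rightarrow> ('f \<Rightarrow> 'u list \<Rightarrow> 'u) \<Rightarrow> ('r \<Rightarrow> 'u list \<Rightarrow> bool) \<Rightarrow> bool" where
  "monster K F R \<longleftrightarrow> infinite K \<and> small K (UNIV :: 'f set) \<and> small K (UNIV :: 'r set) \<and>
      saturated K F R \<and> homogeneous K F R"

definition geE_A :: "('f \<Rightarrow> 'u list \<Rightarrow> 'u) \<Rightarrow> ('r \<Rightarrow> 'u list \<Rightarrow> bool) \<Rightarrow> nat \<Rightarrow> nat \<Rightarrow> 'u set
    \<Rightarrow> ('u list set \<Rightarrow> real) \<Rightarrow> ('u list set \<Rightarrow> real) \<Rightarrow> bool" where
  "geE_A F R n k A \<mu> \<nu> \<longleftrightarrow> (\<exists>lam. keisler F R (n + k) A lam \<and>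
      proj_x F R n k A lam = restr F R n A \<mu> \<and>
      (\<forall>\<omega>. keisler F R (n + k) UNIV \<omega> \<and> restr F R (n + k) A \<omega> = lam \<and>
           proj_x F R n k UNIV \<omega> = \<mu> \<longrightarrow> proj_y F R n k UNIV \<omega> = \<nu>))"

definition geE :: "'k set \<Rightarrow> ('f \<Rightarrow> 'u list \<Rightarrow> 'u) \<Rightarrow> ('r \<Rightarrow> 'u list \<Rightarrow> bool) \<Rightarrow> nat \<Rightarrow> nat
    \<Rightarrow> ('u list set \<Rightarrow> real) \<Rightarrow> ('u list set \<Rightarrow> real) \<Rightarrow> bool" where
  "geE K F R n k \<mu> \<nu> \<longleftrightarrow> (\<exists>A. small K A \<and> geE_A F R n k A \<mu> \<nu>)"

end

theory Submission
  imports Defs "HOL-Analysis.Analysis"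
begin

text \<open>
  Let a small set \<open>A\<close> and \<open>\<lambda> \<in> \<M>\<^sub>x\<^sub>y(A)\<close> witness \<open>\<mu> \<ge>\<^sub>\<E> \<nu>\<close>, and let \<open>B\<close> be \<open>A\<close> together with
  the parameters of \<open>f\<close>. Since the \<open>x\<close>-marginal of \<open>\<lambda>\<close> is \<open>\<mu>|\<^sub>A\<close>, the measures \<open>\<lambda>\<close> and \<open>\<mu>\<close> have a
  common extension \<open>\<omega>\<^sub>0\<close> to a finitely additive probability on all subsets of \<open>\<U>\<^sup>x\<^sup>y\<close>; the
  witness for \<open>\<mu> \<ge>\<^sub>\<E> f(\<nu>)\<close> over \<open>B\<close> is the image of \<open>\<omega>\<^sub>0\<close> under \<open>id \<times> f\<close>, restricted to \<open>B\<close>.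
  Given a global \<open>\<omega>'\<close> extending it with \<open>x\<close>-marginal \<open>\<mu>\<close>, a second common extension lifts \<open>\<omega>'\<close>
  along \<open>id \<times> f\<close> to some \<open>\<omega>\<^sub>1\<close> extending \<open>\<lambda>\<close>. Restricted to definable sets, \<open>\<omega>\<^sub>1\<close> is a Keisler
  measure over \<open>\<U>\<close> extending \<open>\<lambda>\<close> with \<open>x\<close>-marginal \<open>\<mu>\<close>, so its \<open>y\<close>-marginal is \<open>\<nu>\<close>, and hence the
  \<open>z\<close>-marginal of \<open>\<omega>'\<close> is \<open>f(\<nu>)\<close>.

  Both steps use that finitely additive probabilities on algebras of subsets of \<open>X\<close> and \<open>Y\<close>
  which are compatible along \<open>g : X \<rightarrow> Y\<close> have a common extension to all subsets of \<open>X\<close>. For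
  finitely many sets this is the supply-demand (fractional Hall) theorem applied to the atoms of
  the generated algebras; compactness of \<open>[0, 1]\<^bsup>Pow X\<^esup>\<close> does the rest.
\<close>

section \<open>Transport plans and the fractional Hall theorem\<close>

definition neighbours :: "('i \<Rightarrow> 'j \<Rightarrow> bool) \<Rightarrow> 'j set \<Rightarrow> 'i set \<Rightarrow> 'j set" where
  "neighbours E J S = {j\<in>J. \<exists>i\<in>S. E i j}"

definition hall_condition ::
    "('i \<Rightarrow> 'j \<Rightarrow> bool) \<Rightarrow> 'i set \<Rightarrow> 'j set \<Rightarrow> ('i \<Rightarrow> real) \<Rightarrow> ('j \<Rightarrow> real) \<Rightarrow> bool" where
  "hall_condition E I J s d \<longleftrightarrow> (\<forall>S\<subseteq>I. sum s S \<le> sum d (neighbours E J S))"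

definition transport_plan :: "('i \<Rightarrow> 'j \<Rightarrow> bool) \<Rightarrow> 'i set \<Rightarrow> 'j set \<Rightarrow> ('i \<Rightarrow> real) \<Rightarrow> ('j \<Rightarrow> real)
    \<Rightarrow> ('i \<Rightarrow> 'j \<Rightarrow> real) \<Rightarrow> bool" where
  "transport_plan E I J s d q \<longleftrightarrow> (\<forall>i j. 0 \<le> q i j) \<and> (\<forall>i j. \<not> E i j \<longrightarrow> q i j = 0) \<and>
     (\<forall>i\<in>I. sum (q i) J = s i) \<and> (\<forall>j\<in>J. (\<Sum>i\<in>I. q i j) \<le> d j)"

lemma hall_condition_subset:
  "hall_condition E I J s d \<Longrightarrow> I' \<subseteq> I \<Longrightarrow> hall_condition E I' J s d"
  unfolding hall_condition_def by blast

lemma hall_condition_remove_null_sink: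
  assumes "hall_condition E I J s d" "finite J" "d j0 = 0"
  shows "hall_condition E I (J - {j0}) s d"
  unfolding hall_condition_def
proof (intro allI impI)
  fix S assume "S \<subseteq> I"
  have "neighbours E (J - {j0}) S = neighbours E J S - {j0}"
    by (auto simp: neighbours_def)
  moreover have "finite (neighbours E J S)"
    using assms(2) by (simp add: neighbours_def)
  ultimately show "sum s S \<le> sum d (neighbours E (J - {j0}) S)"
    using assms(1,3) \<open>S \<subseteq> I\<close> by (simp add: hall_condition_def sum_diff1)
qed

lemma hall_condition_restrict_neighbours:
  assumes "hall_condition E I J s d" "S \<subseteq> I"
  shows "hall_condition E S (neighbours E J S) s d"
  unfolding hall_condition_def
proof (intro allI impI)
  fix T assume "T \<subseteq> S"
  then have "neighbours E (neighbours E J S) T = neighbours E J T"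
    by (auto simp: neighbours_def)
  then show "sum s T \<le> sum d (neighbours E (neighbours E J S) T)"
    using assms \<open>T \<subseteq> S\<close> by (auto simp: hall_condition_def)
qed

lemma hall_condition_remove_tight:
  assumes hall: "hall_condition E I J s d" and fin: "finite I" "finite J"
    and S: "S \<subseteq> I" and tight: "sum s S = sum d (neighbours E J S)"
  shows "hall_condition E (I - S) (J - neighbours E J S) s d"
  unfolding hall_condition_def
proof (intro allI impI)
  fix T assume T: "T \<subseteq> I - S"
  let ?N = "neighbours E J S" and ?N' = "neighbours E (J - neighbours E J S) T"
  have "finite T" "finite S" "finite ?N" "finite ?N'"
    using T S fin by (auto simp: neighbours_def intro: finite_subset)
  moreover have "neighbours E J (T \<union> S) = ?N' \<union> ?N"
    by (auto simp: neighbours_def)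
  moreover have "T \<inter> S = {}" "?N' \<inter> ?N = {}"
    using T by (auto simp: neighbours_def)
  moreover have "sum s (T \<union> S) \<le> sum d (neighbours E J (T \<union> S))"
    using hall T S unfolding hall_condition_def by (meson Diff_subset Un_least order_trans)
  ultimately show "sum s T \<le> sum d ?N'"
    using tight by (simp add: sum.union_disjoint)
qed

lemma hall_condition_shift_edge:
  assumes hall: "hall_condition E I J s d" and fin: "finite I" "finite J"
    and edge: "E i0 j0" "j0 \<in> J"
    and slack: "\<And>S. S \<subseteq> I - {i0} \<Longrightarrow> j0 \<in> neighbours E J S \<Longrightarrow>
      t \<le> sum d (neighbours E J S) - sum s S"
  shows "hall_condition E I J (\<lambda>i. s i - (if i = i0 then t else 0)) (\<lambda>j. d j - (if j = j0 then t else 0))"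
  unfolding hall_condition_def
proof (intro allI impI)
  fix S assume S: "S \<subseteq> I"
  have "finite S" "finite (neighbours E J S)"
    using S fin by (auto simp: neighbours_def intro: finite_subset)
  then have sums: "(\<Sum>i\<in>S. s i - (if i = i0 then t else 0)) = sum s S - (if i0 \<in> S then t else 0)"
      "(\<Sum>j\<in>neighbours E J S. d j - (if j = j0 then t else 0))
         = sum d (neighbours E J S) - (if j0 \<in> neighbours E J S then t else 0)"
    by (simp_all add: sum_subtractf)
  have "sum s S \<le> sum d (neighbours E J S)"
    using hall S by (auto simp: hall_condition_def)
  moreover have "i0 \<in> S \<Longrightarrow> j0 \<in> neighbours E J S"
    using edge by (auto simp: neighbours_def)
  moreover have "i0 \<notin> S \<Longrightarrow> j0 \<in> neighbours E J S \<Longrightarrow> t \<le> sum d (neighbours E J S) - sum s S"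
    using S by (intro slack) auto
  ultimately show "(\<Sum>i\<in>S. s i - (if i = i0 then t else 0))
      \<le> (\<Sum>j\<in>neighbours E J S. d j - (if j = j0 then t else 0))"
    unfolding sums by (auto split: if_splits)
qed

lemma transport_plan_insert_null_source:
  assumes q: "transport_plan E (I - {i0}) J s d q" and "finite I" "s i0 = 0"
  shows "transport_plan E I J s d (\<lambda>i j. if i = i0 then 0 else q i j)"
proof -
  have "(\<Sum>i\<in>I. if i = i0 then 0 else q i j) = (\<Sum>i\<in>I - {i0}. q i j)" for j
    using \<open>finite I\<close> by (intro sum.mono_neutral_cong_right) auto
  moreover have "(\<Sum>j\<in>J. if i = i0 then 0 else q i j) = s i" if "i \<in> I" for i
    using q that \<open>s i0 = 0\<close> by (cases "i = i0") (auto simp: transport_plan_def)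
  ultimately show ?thesis
    using q by (auto simp: transport_plan_def)
qed

lemma transport_plan_insert_null_sink:
  assumes q: "transport_plan E I (J - {j0}) s d q" and "finite J" "0 \<le> d j0"
  shows "transport_plan E I J s d (\<lambda>i j. if j = j0 then 0 else q i j)"
proof -
  have "(\<Sum>j\<in>J. if j = j0 then 0 else q i j) = sum (q i) (J - {j0})" for i
    using \<open>finite J\<close> by (intro sum.mono_neutral_cong_right) auto
  moreover have "(\<Sum>i\<in>I. if j = j0 then 0 else q i j) \<le> d j" if "j \<in> J" for j
    using q that \<open>0 \<le> d j0\<close> by (cases "j = j0") (auto simp: transport_plan_def)
  ultimately show ?thesis
    using q by (auto simp: transport_plan_def)
qed

lemma transport_plan_combine:
  assumes q1: "transport_plan E S N s d q1" and q2: "transport_plan E (I - S) (J - N) s d q2"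
    and "S \<subseteq> I" "N \<subseteq> J" "finite I" "finite J"
  shows "transport_plan E I J s d
    (\<lambda>i j. if i \<in> S then (if j \<in> N then q1 i j else 0) else (if j \<in> N then 0 else q2 i j))"
    (is "transport_plan E I J s d ?q")
proof -
  have rows: "sum (?q i) J = s i" if "i \<in> I" for i
  proof (cases "i \<in> S")
    case True
    then have "sum (?q i) J = sum (q1 i) N"
      using assms(4,6) by (simp add: sum.If_cases Int_absorb1 Int_commute)
    then show ?thesis using q1 True by (simp add: transport_plan_def)
  next
    case False
    then have "sum (?q i) J = sum (q2 i) (J - N)"
      using assms(6) by (simp add: sum.If_cases Diff_eq Int_commute)
    then show ?thesis using q2 False that by (simp add: transport_plan_def)
  qed
  have cols: "(\<Sum>i\<in>I. ?q i j) \<le> d j" if "j \<in> J" for j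
  proof -
    have "(\<Sum>i\<in>I. ?q i j) = (\<Sum>i\<in>S. ?q i j) + (\<Sum>i\<in>I - S. ?q i j)"
      using assms(3,5) by (simp add: sum.subset_diff)
    also have "\<dots> = (if j \<in> N then (\<Sum>i\<in>S. q1 i j) else (\<Sum>i\<in>I - S. q2 i j))"
      by (simp add: sum.neutral)
    finally show ?thesis using q1 q2 that by (simp add: transport_plan_def)
  qed
  show ?thesis
    using q1 q2 rows cols by (simp add: transport_plan_def)
qed

lemma transport_plan_add_edge:
  assumes q: "transport_plan E I J (\<lambda>i. s i - (if i = i0 then t else 0))
      (\<lambda>j. d j - (if j = j0 then t else 0)) q"
    and "E i0 j0" "0 \<le> t" "i0 \<in> I" "j0 \<in> J" "finite I" "finite J"
  shows "transport_plan E I J s d (\<lambda>i j. q i j + (if i = i0 \<and> j = j0 then t else 0))"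
proof -
  have "(\<Sum>j\<in>J. if i = i0 \<and> j = j0 then t else 0) = (if i = i0 then t else 0)" for i
    using assms(5,7) by simp
  moreover have "(\<Sum>i\<in>I. if i = i0 \<and> j = j0 then t else 0) = (if j = j0 then t else 0)" for j
    using assms(4,6) by simp
  ultimately show ?thesis
    using assms by (auto simp: transport_plan_def sum.distrib)
qed

lemma transport_plan_exists_if_tight:
  assumes IH: "\<And>I' J' s' d'. card I' + card J' < card I + card J \<Longrightarrow> finite I' \<Longrightarrow> finite J' \<Longrightarrow>
      \<forall>i\<in>I'. 0 \<le> s' i \<Longrightarrow> \<forall>j\<in>J'. 0 \<le> d' j \<Longrightarrow> hall_condition E I' J' s' d' \<Longrightarrow>
      \<exists>q. transport_plan E I' J' s' d' q"
    and fin: "finite I" "finite J" and nonneg: "\<forall>i\<in>I. 0 \<le> s i" "\<forall>j\<in>J. 0 \<le> d j"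
    and hall: "hall_condition E I J s d"
    and S: "S \<subseteq> I" "S \<noteq> {}" "S \<noteq> I" and tight: "sum s S = sum d (neighbours E J S)"
  shows "\<exists>q. transport_plan E I J s d q"
proof -
  let ?N = "neighbours E J S"
  have N: "?N \<subseteq> J"
    by (auto simp: neighbours_def)
  have finite: "finite S" "finite ?N"
    using S(1) N fin by (auto intro: finite_subset)
  have card: "card S < card I" "card (I - S) < card I" "card ?N \<le> card J" "card (J - ?N) \<le> card J"
    using S fin N by (auto intro!: psubset_card_mono card_mono)
  have "\<exists>q. transport_plan E S ?N s d q"
    using card finite nonneg S(1) N hall_condition_restrict_neighbours[OF hall S(1)] by (intro IH) auto
  moreover have "\<exists>q. transport_plan E (I - S) (J - ?N) s d q"
    using card fin nonneg hall_condition_remove_tight[OF hall fin S(1) tight] by (intro IH) auto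
  ultimately obtain q1 q2 where "transport_plan E S ?N s d q1" "transport_plan E (I - S) (J - ?N) s d q2"
    by blast
  then show ?thesis
    using S N fin by (blast intro: transport_plan_combine)
qed

lemma transport_plan_exists_if_reducible:
  assumes IH: "\<And>I' J' s' d'. card I' + card J' < card I + card J \<Longrightarrow> finite I' \<Longrightarrow> finite J' \<Longrightarrow>
      \<forall>i\<in>I'. 0 \<le> s' i \<Longrightarrow> \<forall>j\<in>J'. 0 \<le> d' j \<Longrightarrow> hall_condition E I' J' s' d' \<Longrightarrow>
      \<exists>q. transport_plan E I' J' s' d' q"
    and fin: "finite I" "finite J" and nonneg: "\<forall>i\<in>I. 0 \<le> s i" "\<forall>j\<in>J. 0 \<le> d j"
    and hall: "hall_condition E I J s d"
    and reducible: "(\<exists>i\<in>I. s i = 0) \<or> (\<exists>j\<in>J. d j = 0) \<or>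
      (\<exists>S\<subseteq>I. S \<noteq> {} \<and> S \<noteq> I \<and> sum s S = sum d (neighbours E J S))"
  shows "\<exists>q. transport_plan E I J s d q"
  using reducible
proof (elim disjE bexE exE conjE)
  fix i0 assume "i0 \<in> I" "s i0 = 0"
  then have "card (I - {i0}) + card J < card I + card J"
    using card_Diff1_less[OF fin(1)] by simp
  then obtain q where "transport_plan E (I - {i0}) J s d q"
    using IH fin nonneg hall_condition_subset[OF hall] by (meson Diff_subset finite_Diff DiffD1)
  then show ?thesis
    using fin \<open>s i0 = 0\<close> by (blast intro: transport_plan_insert_null_source)
next
  fix j0 assume "j0 \<in> J" "d j0 = 0"
  then have "card I + card (J - {j0}) < card I + card J"
    using card_Diff1_less[OF fin(2)] by simp
  then obtain q where "transport_plan E I (J - {j0}) s d q"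
    using IH fin nonneg hall_condition_remove_null_sink[OF hall fin(2) \<open>d j0 = 0\<close>] by blast
  then show ?thesis
    using fin nonneg \<open>j0 \<in> J\<close> by (blast intro: transport_plan_insert_null_sink)
next
  fix S assume "S \<subseteq> I" "S \<noteq> {}" "S \<noteq> I" "sum s S = sum d (neighbours E J S)"
  then show ?thesis
    using transport_plan_exists_if_tight[OF IH fin nonneg hall] by blast
qed

text \<open>The amount \<open>t\<close> is the largest mass that can be moved along the edge \<open>(i0, j0)\<close> without
  violating Hall's condition. After moving it, \<open>i0\<close> is exhausted, \<open>j0\<close> is full, or some set
  becomes tight, so the remaining instance splits into smaller ones.\<close>

lemma maximal_edge_shift:
  assumes fin: "finite I" and hall: "hall_condition E I J s d"
    and edge: "i0 \<in> I" "0 < s i0" "0 < d j0"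
    and not_tight: "\<And>S. S \<subseteq> I \<Longrightarrow> S \<noteq> {} \<Longrightarrow> S \<noteq> I \<Longrightarrow> sum s S \<noteq> sum d (neighbours E J S)"
  obtains t where "0 < t" "t \<le> s i0" "t \<le> d j0"
    "\<And>S. S \<subseteq> I - {i0} \<Longrightarrow> j0 \<in> neighbours E J S \<Longrightarrow> t \<le> sum d (neighbours E J S) - sum s S"
    "t = s i0 \<or> t = d j0 \<or>
      (\<exists>S. S \<subseteq> I - {i0} \<and> j0 \<in> neighbours E J S \<and> t = sum d (neighbours E J S) - sum s S)"
proof -
  define slack where "slack S = sum d (neighbours E J S) - sum s S" for S
  define TT where "TT = {S. S \<subseteq> I - {i0} \<and> j0 \<in> neighbours E J S}"
  define M where "M = insert (s i0) (insert (d j0) (slack ` TT))"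
  have "finite TT"
    using fin by (auto simp: TT_def intro: finite_subset[of _ "Pow I"])
  then have M: "finite M"
    by (simp add: M_def)
  have "0 < slack S" if "S \<in> TT" for S
  proof -
    have S: "S \<subseteq> I" "S \<noteq> {}" "S \<noteq> I"
      using that edge(1) by (auto simp: TT_def neighbours_def)
    then have "sum s S \<le> sum d (neighbours E J S)"
      using hall unfolding hall_condition_def by blast
    then show ?thesis
      using not_tight[OF S] unfolding slack_def by linarith
  qed
  then have "\<forall>x\<in>M. 0 < x"
    using edge by (auto simp: M_def)
  then have "0 < Min M" "Min M \<le> s i0" "Min M \<le> d j0" "\<And>S. S \<in> TT \<Longrightarrow> Min M \<le> slack S"
    using Min_gr_iff[OF M] Min_le[OF M] by (auto simp: M_def)
  moreover have "Min M = s i0 \<or> Min M = d j0 \<or> (\<exists>S\<in>TT. Min M = slack S)"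
    using Min_in[OF M] by (auto simp: M_def)
  ultimately show ?thesis
    by (intro that[of "Min M"]) (auto simp: TT_def slack_def)
qed

lemma transport_plan_exists_by_shift:
  assumes IH: "\<And>I' J' s' d'. card I' + card J' < card I + card J \<Longrightarrow> finite I' \<Longrightarrow> finite J' \<Longrightarrow>
      \<forall>i\<in>I'. 0 \<le> s' i \<Longrightarrow> \<forall>j\<in>J'. 0 \<le> d' j \<Longrightarrow> hall_condition E I' J' s' d' \<Longrightarrow>
      \<exists>q. transport_plan E I' J' s' d' q"
    and fin: "finite I" "finite J" and nonneg: "\<forall>i\<in>I. 0 \<le> s i" "\<forall>j\<in>J. 0 \<le> d j"
    and hall: "hall_condition E I J s d"
    and edge: "i0 \<in> I" "j0 \<in> J" "E i0 j0" "0 < s i0" "0 < d j0"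
    and not_tight: "\<And>S. S \<subseteq> I \<Longrightarrow> S \<noteq> {} \<Longrightarrow> S \<noteq> I \<Longrightarrow> sum s S \<noteq> sum d (neighbours E J S)"
  shows "\<exists>q. transport_plan E I J s d q"
proof -
  obtain t where t: "0 < t" "t \<le> s i0" "t \<le> d j0"
    "\<And>S. S \<subseteq> I - {i0} \<Longrightarrow> j0 \<in> neighbours E J S \<Longrightarrow> t \<le> sum d (neighbours E J S) - sum s S"
    and t_cases: "t = s i0 \<or> t = d j0 \<or>
      (\<exists>S. S \<subseteq> I - {i0} \<and> j0 \<in> neighbours E J S \<and> t = sum d (neighbours E J S) - sum s S)"
    using maximal_edge_shift[OF fin(1) hall edge(1,4,5) not_tight] by blast
  define s' where "s' i = s i - (if i = i0 then t else 0)" for i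
  define d' where "d' j = d j - (if j = j0 then t else 0)" for j
  have hall': "hall_condition E I J s' d'"
    unfolding s'_def d'_def by (rule hall_condition_shift_edge[OF hall fin edge(3,2) t(4)])
  have "(\<exists>i\<in>I. s' i = 0) \<or> (\<exists>j\<in>J. d' j = 0) \<or>
      (\<exists>S\<subseteq>I. S \<noteq> {} \<and> S \<noteq> I \<and> sum s' S = sum d' (neighbours E J S))"
    using t_cases
  proof (elim disjE exE conjE)
    assume "t = s i0"
    then show ?thesis
      using edge(1) by (auto simp: s'_def)
  next
    assume "t = d j0"
    then show ?thesis
      using edge(2) by (auto simp: d'_def)
  next
    fix S assume S: "S \<subseteq> I - {i0}" "j0 \<in> neighbours E J S"
      and "t = sum d (neighbours E J S) - sum s S"
    moreover have "finite S" "finite (neighbours E J S)"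
      using S(1) fin by (auto simp: neighbours_def intro: finite_subset)
    ultimately have "sum s' S = sum d' (neighbours E J S)"
      by (auto simp: s'_def d'_def sum_subtractf)
    moreover have "S \<noteq> {}" "S \<noteq> I"
      using S edge(1) by (auto simp: neighbours_def)
    ultimately show ?thesis
      using S(1) by blast
  qed
  moreover have "\<forall>i\<in>I. 0 \<le> s' i" "\<forall>j\<in>J. 0 \<le> d' j"
    using nonneg t(2,3) by (auto simp: s'_def d'_def)
  ultimately obtain q where "transport_plan E I J s' d' q"
    using transport_plan_exists_if_reducible[OF IH fin _ _ hall'] by blast
  then show ?thesis
    unfolding s'_def d'_def using t(1) edge fin by (blast intro: transport_plan_add_edge less_imp_le)
qed

theorem transport_plan_exists:
  assumes "finite I" "finite J" "\<forall>i\<in>I. 0 \<le> s i" "\<forall>j\<in>J. 0 \<le> d j" "hall_condition E I J s d"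
  shows "\<exists>q. transport_plan E I J s d q"
  using assms
proof (induction "card I + card J" arbitrary: I J s d rule: less_induct)
  case less
  show ?case
  proof (cases "I = {}")
    case True
    then have "transport_plan E I J s d (\<lambda>_ _. 0)"
      using less.prems(4) by (simp add: transport_plan_def)
    then show ?thesis by blast
  next
    case False
    then obtain i0 where "i0 \<in> I" by blast
    show ?thesis
    proof (cases "(\<exists>i\<in>I. s i = 0) \<or> (\<exists>j\<in>J. d j = 0) \<or>
        (\<exists>S\<subseteq>I. S \<noteq> {} \<and> S \<noteq> I \<and> sum s S = sum d (neighbours E J S))")
      case True
      show ?thesis
        using transport_plan_exists_if_reducible[OF less.hyps less.prems True] .
    next
      case False
      then have pos: "0 < s i0" "\<forall>j\<in>J. 0 < d j"
        using less.prems(3,4) \<open>i0 \<in> I\<close> by force+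
      then have "s i0 \<le> sum d (neighbours E J {i0})"
        using less.prems(5) \<open>i0 \<in> I\<close> by (auto simp: hall_condition_def)
      then have "neighbours E J {i0} \<noteq> {}"
        using pos by auto
      then obtain j0 where "j0 \<in> J" "E i0 j0"
        by (auto simp: neighbours_def)
      moreover have "\<And>S. S \<subseteq> I \<Longrightarrow> S \<noteq> {} \<Longrightarrow> S \<noteq> I \<Longrightarrow> sum s S \<noteq> sum d (neighbours E J S)"
        using False by blast
      ultimately show ?thesis
        using pos \<open>i0 \<in> I\<close> by (intro transport_plan_exists_by_shift[OF less.hyps less.prems]) auto
    qed
  qed
qed

lemma transport_plan_column_sums:
  assumes q: "transport_plan E I J s d q" and fin: "finite I" "finite J"
    and balanced: "sum s I = sum d J" and "j \<in> J"
  shows "(\<Sum>i\<in>I. q i j) = d j"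
proof -
  have "(\<Sum>j\<in>J. d j - (\<Sum>i\<in>I. q i j)) = sum d J - (\<Sum>j\<in>J. \<Sum>i\<in>I. q i j)"
    by (simp add: sum_subtractf)
  also have "(\<Sum>j\<in>J. \<Sum>i\<in>I. q i j) = (\<Sum>i\<in>I. sum (q i) J)"
    by (rule sum.swap)
  also have "(\<Sum>i\<in>I. sum (q i) J) = sum s I"
    using q by (intro sum.cong) (auto simp: transport_plan_def)
  finally have "(\<Sum>j\<in>J. d j - (\<Sum>i\<in>I. q i j)) = 0"
    using balanced by simp
  moreover have "\<forall>j\<in>J. 0 \<le> d j - (\<Sum>i\<in>I. q i j)"
    using q by (simp add: transport_plan_def)
  ultimately have "\<forall>j\<in>J. d j - (\<Sum>i\<in>I. q i j) = 0"
    by (simp add: sum_nonneg_eq_0_iff[OF fin(2)])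
  then show ?thesis
    using \<open>j \<in> J\<close> by simp
qed

section \<open>Finitely additive probabilities on algebras of sets\<close>

definition prob_charge :: "'a set \<Rightarrow> 'a set set \<Rightarrow> ('a set \<Rightarrow> real) \<Rightarrow> bool" where
  "prob_charge \<Omega> M \<mu> \<longleftrightarrow> (\<forall>a\<in>M. 0 \<le> \<mu> a) \<and> \<mu> \<Omega> = 1 \<and> additive M \<mu>"

lemma prob_charge_subalgebra:
  "prob_charge \<Omega> M \<mu> \<Longrightarrow> N \<subseteq> M \<Longrightarrow> \<Omega> \<in> N \<Longrightarrow> prob_charge \<Omega> N \<mu>"
  unfolding prob_charge_def additive_def by blast

lemma prob_charge_Pow_pushforward:
  assumes "prob_charge X (Pow X) \<mu>" "g \<in> X \<rightarrow> Y"
  shows "prob_charge Y (Pow Y) (\<lambda>E. \<mu> (g -` E \<inter> X))"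
proof -
  have "g -` Y \<inter> X = X"
    using assms(2) by auto
  moreover have "\<mu> (g -` (D \<union> E) \<inter> X) = \<mu> (g -` D \<inter> X) + \<mu> (g -` E \<inter> X)" if "D \<inter> E = {}" for D E
  proof -
    have "g -` (D \<union> E) \<inter> X = (g -` D \<inter> X) \<union> (g -` E \<inter> X)"
      by blast
    then show ?thesis
      using assms(1) that by (auto simp: prob_charge_def intro!: additiveD)
  qed
  ultimately show ?thesis
    using assms(1) by (auto simp: prob_charge_def additive_def)
qed

lemma prob_charge_point_masses:
  assumes "finite K" "\<forall>k\<in>K. 0 \<le> w k" "sum w K = 1" "\<forall>k\<in>K. w k \<noteq> 0 \<longrightarrow> p k \<in> X"
  shows "prob_charge X (Pow X) (\<lambda>T. \<Sum>k\<in>K. w k * indicator T (p k))"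
proof -
  have "(\<Sum>k\<in>K. w k * indicator X (p k)) = sum w K"
    using assms(4) by (intro sum.cong) auto
  moreover have "(\<Sum>k\<in>K. w k * indicator (S \<union> T) (p k))
      = (\<Sum>k\<in>K. w k * indicator S (p k)) + (\<Sum>k\<in>K. w k * indicator T (p k))" if "S \<inter> T = {}" for S T
    using that by (simp add: indicator_disj_union distrib_left sum.distrib)
  ultimately show ?thesis
    using assms(2,3) by (auto simp: prob_charge_def additive_def intro: sum_nonneg)
qed

context algebra
begin

lemma prob_charge_empty:
  assumes "prob_charge \<Omega> M \<mu>" shows "\<mu> {} = 0"
  using assms additiveD[of M \<mu> \<Omega> "{}"] by (simp add: prob_charge_def)

lemma prob_charge_mono:
  assumes "prob_charge \<Omega> M \<mu>" "a \<in> M" "b \<in> M" "a \<subseteq> b"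
  shows "\<mu> a \<le> \<mu> b"
proof -
  have "\<mu> b = \<mu> a + \<mu> (b - a)"
    using assms additiveD[of M \<mu> a "b - a"] by (auto simp: prob_charge_def Un_absorb1)
  moreover have "b - a \<in> M"
    using assms(2,3) by blast
  ultimately show ?thesis
    using assms(1) by (simp add: prob_charge_def)
qed

lemma prob_charge_le_one:
  assumes "prob_charge \<Omega> M \<mu>" "a \<in> M" shows "\<mu> a \<le> 1"
  using prob_charge_mono[OF assms(1,2) top] sets_into_space[OF assms(2)] assms(1)
  by (simp add: prob_charge_def)

lemma prob_charge_Union:
  assumes "prob_charge \<Omega> M \<mu>" "finite C" "C \<subseteq> M" "disjoint C"
  shows "\<mu> (\<Union>C) = sum \<mu> C"
  using assms(2-4)
proof (induction C rule: finite_induct)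
  case empty
  then show ?case using prob_charge_empty[OF assms(1)] by simp
next
  case (insert c C)
  have "c \<inter> \<Union>C = {}"
    using insert.hyps(2) insert.prems(2) by (auto simp: pairwise_def disjnt_def)
  then have "\<mu> (c \<union> \<Union>C) = \<mu> c + \<mu> (\<Union>C)"
    using insert.prems(1) insert.hyps(1) assms(1) by (intro additiveD) (auto simp: prob_charge_def)
  then show ?case
    using insert by (simp add: pairwise_insert)
qed

end

definition atom :: "'a set set \<Rightarrow> 'a set \<Rightarrow> 'a \<Rightarrow> 'a set" where
  "atom F X x = {y\<in>X. \<forall>a\<in>F. y \<in> a \<longleftrightarrow> x \<in> a}"

definition atoms :: "'a set set \<Rightarrow> 'a set \<Rightarrow> 'a set set" where
  "atoms F X = atom F X ` X"

lemma atom_self: "x \<in> X \<Longrightarrow> x \<in> atom F X x"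
  by (auto simp: atom_def)

lemma atoms_subset: "c \<in> atoms F X \<Longrightarrow> c \<subseteq> X"
  by (auto simp: atoms_def atom_def)

lemma Union_atoms: "\<Union>(atoms F X) = X"
  by (auto simp: atoms_def atom_def)

lemma atom_eq: "y \<in> atom F X x \<Longrightarrow> atom F X y = atom F X x"
  by (auto simp: atom_def)

lemma disjoint_atoms: "disjoint (atoms F X)"
  unfolding pairwise_def disjnt_def atoms_def by (blast dest: atom_eq)

lemma finite_atoms:
  assumes "finite F" shows "finite (atoms F X)"
proof -
  define atom_of where "atom_of G = {y\<in>X. \<forall>a\<in>F. y \<in> a \<longleftrightarrow> a \<in> G}" for G
  have "atom F X x = atom_of {a\<in>F. x \<in> a}" for x
    by (auto simp: atom_def atom_of_def)
  then have "atoms F X \<subseteq> atom_of ` Pow F"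
    unfolding atoms_def by blast
  then show ?thesis
    by (rule finite_subset) (simp add: assms)
qed

lemma atom_subset_or_disjoint:
  assumes "a \<in> F" "c \<in> atoms F X" shows "c \<subseteq> a \<or> c \<inter> a = {}"
proof -
  obtain x where "c = atom F X x"
    using assms(2) by (auto simp: atoms_def)
  then show ?thesis
    using assms(1) unfolding atom_def by blast
qed

lemma Union_atoms_subset:
  assumes "a \<in> F" "a \<subseteq> X" shows "\<Union>{c\<in>atoms F X. c \<subseteq> a} = a"
proof
  show "a \<subseteq> \<Union>{c\<in>atoms F X. c \<subseteq> a}"
  proof
    fix x assume "x \<in> a"
    then have x: "x \<in> X"
      using assms(2) by blast
    then have "x \<in> atom F X x"
      by (rule atom_self)
    moreover have "atom F X x \<subseteq> a"
      using \<open>x \<in> a\<close> assms(1) unfolding atom_def by blast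
    ultimately show "x \<in> \<Union>{c\<in>atoms F X. c \<subseteq> a}"
      using x unfolding atoms_def by (intro UnionI[of "atom F X x"]) auto
  qed
  show "\<Union>{c\<in>atoms F X. c \<subseteq> a} \<subseteq> a"
    by blast
qed

lemma (in algebra) atoms_sets:
  assumes "finite F" "F \<subseteq> M" shows "atoms F \<Omega> \<subseteq> M"
proof
  fix c assume "c \<in> atoms F \<Omega>"
  then obtain x where "c = atom F \<Omega> x"
    by (auto simp: atoms_def)
  moreover have "atom F \<Omega> x = \<Omega> - (\<Union>a\<in>{a\<in>F. x \<in> a}. \<Omega> - a) - (\<Union>a\<in>{a\<in>F. x \<notin> a}. a)"
    using assms(2) sets_into_space by (auto simp: atom_def)
  moreover have "(\<Union>a\<in>{a\<in>F. x \<in> a}. \<Omega> - a) \<in> M"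
    using assms by (intro finite_UN) auto
  moreover have "(\<Union>a\<in>{a\<in>F. x \<notin> a}. a) \<in> M"
    using assms by (intro finite_UN) auto
  ultimately show "c \<in> M"
    by (simp only: Diff top)
qed

lemma (in algebra) prob_charge_Union_atoms:
  assumes "prob_charge \<Omega> M \<mu>" "finite F" "F \<subseteq> M" "C \<subseteq> atoms F \<Omega>"
  shows "\<Union>C \<in> M" "\<mu> (\<Union>C) = sum \<mu> C"
proof -
  have C: "finite C" "C \<subseteq> M" "disjoint C"
    using assms(4) finite_atoms[OF assms(2)] atoms_sets[OF assms(2,3)]
      pairwise_subset[OF disjoint_atoms assms(4)] by (auto intro: finite_subset)
  then show "\<Union>C \<in> M"
    by blast
  show "\<mu> (\<Union>C) = sum \<mu> C"
    using prob_charge_Union[OF assms(1) C] .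
qed

lemma (in algebra) prob_charge_atoms:
  assumes \<mu>: "prob_charge \<Omega> M \<mu>" and F: "finite F" "F \<subseteq> M"
  shows "sum \<mu> (atoms F \<Omega>) = 1" "\<forall>c\<in>atoms F \<Omega>. 0 \<le> \<mu> c"
    and "a \<in> F \<Longrightarrow> sum \<mu> {c\<in>atoms F \<Omega>. c \<subseteq> a} = \<mu> a"
proof -
  show "sum \<mu> (atoms F \<Omega>) = 1"
    using prob_charge_Union_atoms(2)[OF \<mu> F order_refl] \<mu> by (simp add: Union_atoms prob_charge_def)
  show "\<forall>c\<in>atoms F \<Omega>. 0 \<le> \<mu> c"
    using atoms_sets[OF F] \<mu> by (auto simp: prob_charge_def)
  assume "a \<in> F"
  then have "\<Union>{c\<in>atoms F \<Omega>. c \<subseteq> a} = a"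
    using F(2) sets_into_space by (intro Union_atoms_subset) auto
  then show "sum \<mu> {c\<in>atoms F \<Omega>. c \<subseteq> a} = \<mu> a"
    using prob_charge_Union_atoms(2)[OF \<mu> F, of "{c\<in>atoms F \<Omega>. c \<subseteq> a}"] by simp
qed

lemma hall_condition_atoms:
  assumes X: "algebra X AA" "prob_charge X AA m1" and Y: "algebra Y DD" "prob_charge Y DD \<rho>"
    and g: "g \<in> X \<rightarrow> Y" and compat: "\<forall>a\<in>AA. \<forall>D\<in>DD. a \<subseteq> g -` D \<longrightarrow> m1 a \<le> \<rho> D"
    and F: "finite F1" "F1 \<subseteq> AA" "finite F2" "F2 \<subseteq> DD"
  shows "hall_condition (\<lambda>c1 c2. \<exists>x\<in>c1. g x \<in> c2) (atoms F1 X) (atoms F2 Y) m1 \<rho>"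
  unfolding hall_condition_def
proof (intro allI impI)
  fix S assume S: "S \<subseteq> atoms F1 X"
  let ?N = "neighbours (\<lambda>c1 c2. \<exists>x\<in>c1. g x \<in> c2) (atoms F2 Y) S"
  have N: "?N \<subseteq> atoms F2 Y"
    by (auto simp: neighbours_def)
  have sub: "\<Union>S \<subseteq> g -` \<Union>?N"
  proof
    fix x assume "x \<in> \<Union>S"
    then obtain c1 where c1: "c1 \<in> S" "x \<in> c1"
      by blast
    then have "c1 \<in> atoms F1 X"
      using S by blast
    then have "c1 \<subseteq> X"
      by (rule atoms_subset)
    then have "g x \<in> Y"
      using g c1(2) by blast
    then have "g x \<in> atom F2 Y (g x)" "atom F2 Y (g x) \<in> atoms F2 Y"
      unfolding atoms_def by (rule atom_self, rule imageI)
    then have "atom F2 Y (g x) \<in> ?N"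
      using c1 unfolding neighbours_def by blast
    then show "x \<in> g -` \<Union>?N"
      using \<open>g x \<in> atom F2 Y (g x)\<close> by blast
  qed
  note sums = algebra.prob_charge_Union_atoms[OF X F(1,2) S] algebra.prob_charge_Union_atoms[OF Y F(3,4) N]
  have "m1 (\<Union>S) \<le> \<rho> (\<Union>?N)"
    using compat sums(1,3) sub by blast
  then show "sum m1 S \<le> sum \<rho> ?N"
    using sums(2,4) by simp
qed

definition plan_charge :: "'i set \<Rightarrow> 'j set \<Rightarrow> ('i \<Rightarrow> 'j \<Rightarrow> real) \<Rightarrow> ('i \<Rightarrow> 'j \<Rightarrow> 'a) \<Rightarrow> 'a set \<Rightarrow> real"
  where "plan_charge I J q pt T = (\<Sum>(i, j)\<in>I \<times> J. q i j * indicator T (pt i j))"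

lemma prob_charge_plan_charge:
  assumes q: "transport_plan E I J s d q" and fin: "finite I" "finite J" and "sum s I = 1"
    and pt: "\<And>i j. i \<in> I \<Longrightarrow> j \<in> J \<Longrightarrow> E i j \<Longrightarrow> pt i j \<in> X"
  shows "prob_charge X (Pow X) (plan_charge I J q pt)"
proof -
  have "plan_charge I J q pt = (\<lambda>T. \<Sum>k\<in>I \<times> J. case_prod q k * indicator T (case_prod pt k))"
    unfolding plan_charge_def by (simp add: case_prod_unfold)
  moreover have "pt i j \<in> X" if "i \<in> I" "j \<in> J" "q i j \<noteq> 0" for i j
    using q that by (intro pt) (auto simp: transport_plan_def)
  moreover have "(\<Sum>k\<in>I \<times> J. case_prod q k) = 1"
    using q \<open>sum s I = 1\<close> by (simp add: sum.cartesian_product[symmetric] transport_plan_def)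
  moreover have "\<forall>k\<in>I \<times> J. 0 \<le> case_prod q k"
    using q by (auto simp: transport_plan_def)
  ultimately show ?thesis
    using fin by (simp only:) (rule prob_charge_point_masses; auto)
qed

lemma plan_charge_rows:
  assumes q: "transport_plan E I J s d q" and fin: "finite I" "finite J"
    and T: "\<And>i j. i \<in> I \<Longrightarrow> j \<in> J \<Longrightarrow> E i j \<Longrightarrow> pt i j \<in> T \<longleftrightarrow> P i"
  shows "plan_charge I J q pt T = sum s {i\<in>I. P i}"
proof -
  have "q i j * indicator T (pt i j) = (if P i then q i j else 0)" if "i \<in> I" "j \<in> J" for i j
    using T[OF that] q by (cases "E i j") (auto simp: transport_plan_def)
  then have "plan_charge I J q pt T = (\<Sum>i\<in>I. \<Sum>j\<in>J. if P i then q i j else 0)"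
    unfolding plan_charge_def sum.cartesian_product[symmetric] by simp
  also have "\<dots> = (\<Sum>i\<in>I. if P i then s i else 0)"
    using q by (intro sum.cong refl) (simp add: transport_plan_def)
  finally show ?thesis
    using fin by (simp add: sum.inter_filter)
qed

lemma plan_charge_columns:
  assumes q: "transport_plan E I J s d q" and fin: "finite I" "finite J" and "sum s I = sum d J"
    and T: "\<And>i j. i \<in> I \<Longrightarrow> j \<in> J \<Longrightarrow> E i j \<Longrightarrow> pt i j \<in> T \<longleftrightarrow> Q j"
  shows "plan_charge I J q pt T = sum d {j\<in>J. Q j}"
proof -
  have "q i j * indicator T (pt i j) = (if Q j then q i j else 0)" if "i \<in> I" "j \<in> J" for i j
    using T[OF that] q by (cases "E i j") (auto simp: transport_plan_def)
  then have "plan_charge I J q pt T = (\<Sum>j\<in>J. \<Sum>i\<in>I. if Q j then q i j else 0)"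
    unfolding plan_charge_def sum.cartesian_product[symmetric] sum.swap[of _ J] by simp
  also have "\<dots> = (\<Sum>j\<in>J. if Q j then d j else 0)"
    using transport_plan_column_sums[OF assms(1-4)] by (intro sum.cong refl) simp
  finally show ?thesis
    using fin by (simp add: sum.inter_filter)
qed

lemma finite_common_extension:
  assumes X: "algebra X AA" "prob_charge X AA m1" and Y: "algebra Y DD" "prob_charge Y DD \<rho>"
    and g: "g \<in> X \<rightarrow> Y" and compat: "\<forall>a\<in>AA. \<forall>D\<in>DD. a \<subseteq> g -` D \<longrightarrow> m1 a \<le> \<rho> D"
    and F: "finite F1" "F1 \<subseteq> AA" "finite F2" "F2 \<subseteq> DD"
  shows "\<exists>m. prob_charge X (Pow X) m \<and> (\<forall>a\<in>F1. m a = m1 a) \<and> (\<forall>D\<in>F2. m (g -` D \<inter> X) = \<rho> D)"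
proof -
  let ?I = "atoms F1 X" and ?J = "atoms F2 Y" and ?E = "\<lambda>c1 c2. \<exists>x\<in>c1. g x \<in> c2"
  note atoms_X = algebra.prob_charge_atoms[OF X F(1,2)] and atoms_Y = algebra.prob_charge_atoms[OF Y F(3,4)]
  have fin: "finite ?I" "finite ?J"
    using F by (simp_all add: finite_atoms)
  obtain q where q: "transport_plan ?E ?I ?J m1 \<rho> q"
    using transport_plan_exists[OF fin atoms_X(2) atoms_Y(2) hall_condition_atoms[OF X Y g compat F]] by blast
  define pt where "pt c1 c2 = (SOME x. x \<in> c1 \<and> g x \<in> c2)" for c1 c2
  have pt: "pt c1 c2 \<in> c1" "g (pt c1 c2) \<in> c2" if "?E c1 c2" for c1 c2
    using someI_ex[of "\<lambda>x. x \<in> c1 \<and> g x \<in> c2"] that by (auto simp: pt_def)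
  have pt_X: "pt c1 c2 \<in> X" if "c1 \<in> ?I" "?E c1 c2" for c1 c2
    using pt(1)[OF that(2)] atoms_subset[OF that(1)] by blast
  show ?thesis
  proof (intro exI conjI ballI)
    show "prob_charge X (Pow X) (plan_charge ?I ?J q pt)"
      using prob_charge_plan_charge[OF q fin atoms_X(1)] pt_X by blast
  next
    fix a assume a: "a \<in> F1"
    have "pt c1 c2 \<in> a \<longleftrightarrow> c1 \<subseteq> a" if "c1 \<in> ?I" "?E c1 c2" for c1 c2
      using atom_subset_or_disjoint[OF a that(1)] pt(1)[OF that(2)] by blast
    then have "plan_charge ?I ?J q pt a = sum m1 {c\<in>?I. c \<subseteq> a}"
      by (rule plan_charge_rows[OF q fin])
    then show "plan_charge ?I ?J q pt a = m1 a"
      using atoms_X(3)[OF a] by simp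
  next
    fix D assume D: "D \<in> F2"
    have "pt c1 c2 \<in> g -` D \<inter> X \<longleftrightarrow> c2 \<subseteq> D" if "c1 \<in> ?I" "c2 \<in> ?J" "?E c1 c2" for c1 c2
      using atom_subset_or_disjoint[OF D that(2)] pt[OF that(3)] pt_X[OF that(1,3)] by blast
    then have "plan_charge ?I ?J q pt (g -` D \<inter> X) = sum \<rho> {c\<in>?J. c \<subseteq> D}"
      using atoms_X(1) atoms_Y(1) by (intro plan_charge_columns[OF q fin]) auto
    then show "plan_charge ?I ?J q pt (g -` D \<inter> X) = \<rho> D"
      using atoms_Y(3)[OF D] by simp
  qed
qed

lemma closed_prob_charges: "closed {m :: 'a set \<Rightarrow> real. prob_charge X (Pow X) m}"
proof -
  have "{m :: 'a set \<Rightarrow> real. prob_charge X (Pow X) m} = (\<Inter>a\<in>Pow X. {m. 0 \<le> m a}) \<inter> {m. m X = 1} \<inter>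
      (\<Inter>(S, T)\<in>{(S, T). S \<subseteq> X \<and> T \<subseteq> X \<and> S \<inter> T = {}}. {m. m (S \<union> T) = m S + m T})"
    by (auto simp: prob_charge_def additive_def)
  then show ?thesis
    by (simp only:) (intro closed_Int closed_INT ballI;
        auto intro!: closed_Collect_le closed_Collect_eq continuous_on_add)
qed

lemma prob_charge_compactness:
  fixes X :: "'a set" and C :: "('a set \<times> real) set"
  assumes C: "fst ` C \<subseteq> Pow X"
    and finitely_satisfiable: "\<And>C'. finite C' \<Longrightarrow> C' \<subseteq> C \<Longrightarrow>
      \<exists>m. prob_charge X (Pow X) m \<and> (\<forall>(a, r)\<in>C'. m a = r)"
  shows "\<exists>m. prob_charge X (Pow X) m \<and> (\<forall>(a, r)\<in>C. m a = r)"
proof -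
  define K :: "('a set \<Rightarrow> real) set" where "K = PiE UNIV (\<lambda>_. {0..1}) \<inter> {m. prob_charge X (Pow X) m}"
  define constraint :: "'a set \<times> real \<Rightarrow> ('a set \<Rightarrow> real) set"
    where "constraint = (\<lambda>(a, r). {m. m a = r})"
  have "compactin (product_topology (\<lambda>_. euclidean) UNIV) (PiE UNIV (\<lambda>_. {0..1::real}))"
    unfolding compactin_PiE by simp
  then have "compact K"
    unfolding K_def using closed_prob_charges
    by (intro compact_Int_closed) (simp_all only: euclidean_product_topology compactin_euclidean_iff)
  moreover have "closed T" if "T \<in> constraint ` C" for T
    using that by (auto simp: constraint_def closed_Collect_eq)
  moreover have "K \<inter> \<Inter>F' \<noteq> {}" if F': "finite F'" "F' \<subseteq> constraint ` C" for F'
  proof -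
    obtain C' where C': "C' \<subseteq> C" "finite C'" "F' = constraint ` C'"
      using finite_subset_image[OF F'] by blast
    then obtain m where m: "prob_charge X (Pow X) m" "\<forall>(a, r)\<in>C'. m a = r"
      using finitely_satisfiable by blast
    \<comment> \<open>Values on sets outside \<open>Pow X\<close> are irrelevant; setting them to 0 lands in the cube.\<close>
    define m' where "m' S = (if S \<subseteq> X then m S else 0)" for S
    have "m' \<in> K"
      using m(1) algebra.prob_charge_le_one[OF algebra_Pow m(1)]
      by (auto simp: K_def m'_def prob_charge_def additive_def)
    moreover have "m' \<in> \<Inter>F'"
      using C' m(2) C by (fastforce simp: constraint_def m'_def)
    ultimately show ?thesis
      by blast
  qed
  ultimately obtain m where "m \<in> K" "m \<in> \<Inter>(constraint ` C)"
    using compact_imp_fip[of K "constraint ` C"] by blast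
  then show ?thesis
    by (auto simp: K_def constraint_def)
qed

theorem prob_charge_common_extension:
  assumes X: "algebra X AA" "prob_charge X AA m1" and Y: "algebra Y DD" "prob_charge Y DD \<rho>"
    and g: "g \<in> X \<rightarrow> Y" and compat: "\<forall>a\<in>AA. \<forall>D\<in>DD. a \<subseteq> g -` D \<longrightarrow> m1 a \<le> \<rho> D"
  shows "\<exists>m. prob_charge X (Pow X) m \<and> (\<forall>a\<in>AA. m a = m1 a) \<and> (\<forall>D\<in>DD. m (g -` D \<inter> X) = \<rho> D)"
proof -
  define on_X where "on_X a = (a, m1 a)" for a
  define via_g where "via_g D = (g -` D \<inter> X, \<rho> D)" for D
  have "\<exists>m. prob_charge X (Pow X) m \<and> (\<forall>(a, r)\<in>on_X ` AA \<union> via_g ` DD. m a = r)"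
  proof (rule prob_charge_compactness)
    have "AA \<subseteq> Pow X"
      using X(1) by (simp add: algebra_iff_Un)
    then show "fst ` (on_X ` AA \<union> via_g ` DD) \<subseteq> Pow X"
      unfolding on_X_def via_g_def by force
  next
    fix C' assume C': "finite C'" "C' \<subseteq> on_X ` AA \<union> via_g ` DD"
    have fin: "finite (C' \<inter> on_X ` AA)" "finite (C' \<inter> via_g ` DD)"
      using C'(1) by simp_all
    obtain F1 where F1: "F1 \<subseteq> AA \<and> finite F1 \<and> C' \<inter> on_X ` AA = on_X ` F1"
      using finite_subset_image[OF fin(1) Int_lower2] ..
    obtain F2 where F2: "F2 \<subseteq> DD \<and> finite F2 \<and> C' \<inter> via_g ` DD = via_g ` F2"
      using finite_subset_image[OF fin(2) Int_lower2] ..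
    note F = F1[THEN conjunct1] F1[THEN conjunct2, THEN conjunct1] F1[THEN conjunct2, THEN conjunct2]
      F2[THEN conjunct1] F2[THEN conjunct2, THEN conjunct1] F2[THEN conjunct2, THEN conjunct2]
    obtain m where m: "prob_charge X (Pow X) m" "\<forall>a\<in>F1. m a = m1 a" "\<forall>D\<in>F2. m (g -` D \<inter> X) = \<rho> D"
      using finite_common_extension[OF X Y g compat F(2,1,5,4)] by blast
    have "\<forall>(a, r)\<in>on_X ` F1 \<union> via_g ` F2. m a = r"
      using m(2,3) by (auto simp: on_X_def via_g_def)
    moreover have "C' \<subseteq> on_X ` F1 \<union> via_g ` F2"
      using C'(2) F(3,6) by blast
    ultimately have "\<forall>(a, r)\<in>C'. m a = r"
      unfolding Ball_def by blast
    then show "\<exists>m. prob_charge X (Pow X) m \<and> (\<forall>(a, r)\<in>C'. m a = r)"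
      using m(1) by blast
  qed
  then obtain m where m: "prob_charge X (Pow X) m" "\<forall>(a, r)\<in>on_X ` AA \<union> via_g ` DD. m a = r"
    by blast
  have "m a = m1 a" if "a \<in> AA" for a
    using bspec[OF m(2), of "on_X a"] that by (simp add: on_X_def)
  moreover have "m (g -` D \<inter> X) = \<rho> D" if "D \<in> DD" for D
    using bspec[OF m(2), of "via_g D"] that by (simp add: via_g_def)
  ultimately show ?thesis
    using m(1) by blast
qed

section \<open>Definable sets\<close>

abbreviation tuples :: "nat \<Rightarrow> 'a list set" where
  "tuples p \<equiv> {v. length v = p}"

fun rename_trm :: "(nat \<Rightarrow> nat) \<Rightarrow> 'f trm \<Rightarrow> 'f trm" where
  "rename_trm \<rho> (Var i) = Var (\<rho> i)"
| "rename_trm \<rho> (Fn g ts) = Fn g (map (rename_trm \<rho>) ts)"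

fun rename_form :: "(nat \<Rightarrow> nat) \<Rightarrow> ('f, 'r) form \<Rightarrow> ('f, 'r) form" where
  "rename_form \<rho> Bot = Bot"
| "rename_form \<rho> (Equ s t) = Equ (rename_trm \<rho> s) (rename_trm \<rho> t)"
| "rename_form \<rho> (Rl r ts) = Rl r (map (rename_trm \<rho>) ts)"
| "rename_form \<rho> (Neg p) = Neg (rename_form \<rho> p)"
| "rename_form \<rho> (Conj p q) = Conj (rename_form \<rho> p) (rename_form \<rho> q)"
| "rename_form \<rho> (Exi i p) =
    \<comment> \<open>the bound variable becomes one outside the image of the free variables, avoiding capture\<close>
    (let j = Suc (Max (insert 0 (\<rho> ` (fv p - {i})))) in Exi j (rename_form (\<rho>(i := j)) p))"

lemma finite_fvt: "finite (fvt t)"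
  by (induction t) auto

lemma finite_fv: "finite (fv p)"
  by (induction p) (auto simp: finite_fvt)

lemma evt_rename_trm: "evt F e (rename_trm \<rho> t) = evt F (e \<circ> \<rho>) t"
  by (induction t) (auto cong: map_cong)

lemma fvt_rename_trm: "fvt (rename_trm \<rho> t) = \<rho> ` fvt t"
  by (induction t) auto

lemma evt_cong: "(\<forall>i\<in>fvt t. e i = e' i) \<Longrightarrow> evt F e t = evt F e' t"
  by (induction t) (auto cong: map_cong)

lemma sat_cong: "(\<forall>i\<in>fv p. e i = e' i) \<Longrightarrow> sat F R e p = sat F R e' p"
proof (induction p arbitrary: e e')
  case (Equ s t) then show ?case using evt_cong[of s e e' F] evt_cong[of t e e' F] by simp
next
  case (Rl r ts)
  then have "map (evt F e) ts = map (evt F e') ts"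
    by (intro map_cong refl evt_cong) auto
  then show ?case by (simp only: sat.simps)
next
  case (Conj p q)
  have "sat F R e p = sat F R e' p" using Conj.prems by (intro Conj.IH(1)) auto
  moreover have "sat F R e q = sat F R e' q" using Conj.prems by (intro Conj.IH(2)) auto
  ultimately show ?case by simp
next
  case (Exi i p)
  have "sat F R (e(i := a)) p = sat F R (e'(i := a)) p" for a
  proof -
    have "\<forall>k\<in>fv p. (e(i := a)) k = (e'(i := a)) k" using Exi.prems by auto
    then show ?thesis by (rule Exi.IH)
  qed
  then show ?case by simp
qed auto

lemma sat_rename_form: "sat F R e (rename_form \<rho> p) = sat F R (e \<circ> \<rho>) p"
proof (induction p arbitrary: \<rho> e)
  case (Equ s t) then show ?case by (simp add: evt_rename_trm comp_def)
next
  case (Rl r ts) then show ?case by (simp add: evt_rename_trm comp_def)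
next
  case (Exi i p)
  define j where "j = Suc (Max (insert 0 (\<rho> ` (fv p - {i}))))"
  have fin: "finite (insert 0 (\<rho> ` (fv p - {i})))" using finite_fv by auto
  have jne: "\<rho> k \<noteq> j" if "k \<in> fv p" "k \<noteq> i" for k
  proof -
    have "\<rho> k \<le> Max (insert 0 (\<rho> ` (fv p - {i})))" using fin that by (intro Max_ge) auto
    then show ?thesis unfolding j_def by simp
  qed
  have "sat F R e (rename_form \<rho> (Exi i p)) = (\<exists>a. sat F R (e(j := a)) (rename_form (\<rho>(i := j)) p))"
    by (simp add: j_def Let_def)
  also have "\<dots> = (\<exists>a. sat F R ((e(j := a)) \<circ> (\<rho>(i := j))) p)"
    using Exi.IH by presburger
  also have "\<dots> = (\<exists>a. sat F R ((e \<circ> \<rho>)(i := a)) p)"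
  proof -
    have "sat F R ((e(j := a)) \<circ> (\<rho>(i := j))) p = sat F R ((e \<circ> \<rho>)(i := a)) p" for a
      by (rule sat_cong) (auto simp: jne)
    then show ?thesis by simp
  qed
  finally show ?case by (simp add: comp_def)
qed auto

lemma fv_rename_form: "fv (rename_form \<rho> p) \<subseteq> \<rho> ` fv p"
proof (induction p arbitrary: \<rho>)
  case (Equ s t) then show ?case by (auto simp: fvt_rename_trm)
next
  case (Rl r ts) then show ?case by (auto simp: fvt_rename_trm)
next
  case (Neg p) then show ?case by simp
next
  case (Conj p q)
  have a: "fv (rename_form \<rho> p) \<subseteq> \<rho> ` fv (Conj p q)" using Conj.IH(1)[of \<rho>] by auto
  have b: "fv (rename_form \<rho> q) \<subseteq> \<rho> ` fv (Conj p q)" using Conj.IH(2)[of \<rho>] by auto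
  show ?case using a b by simp
next
  case (Exi i p)
  define j where "j = Suc (Max (insert 0 (\<rho> ` (fv p - {i}))))"
  have "fv (rename_form \<rho> (Exi i p)) = fv (rename_form (\<rho>(i := j)) p) - {j}" by (simp add: j_def Let_def)
  also have "\<dots> \<subseteq> (\<rho>(i := j)) ` fv p - {j}" using Exi.IH by blast
  also have "\<dots> \<subseteq> \<rho> ` (fv p - {i})" by auto
  finally show ?case by simp
qed auto

lemma sat_rename_form_eq:
  "(\<forall>i\<in>fv \<phi>. e (\<rho> i) = ys ! i) \<Longrightarrow> sat F R e (rename_form \<rho> \<phi>) = sat F R (\<lambda>i. ys ! i) \<phi>"
  unfolding sat_rename_form by (rule sat_cong) auto

lemma defsetsE:
  fixes F :: "'f \<Rightarrow> 'u list \<Rightarrow> 'u" and R :: "'r \<Rightarrow> 'u list \<Rightarrow> bool"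
  assumes "S \<in> defsets F R p C"
  obtains \<phi> :: "('f, 'r) form" and ps where "set ps \<subseteq> C" "fv \<phi> \<subseteq> {..<p + length ps}"
    "S = {v. length v = p \<and> sat F R (\<lambda>i. (v @ ps) ! i) \<phi>}"
  using assms unfolding defsets_def by blast

lemma defsetsI:
  fixes \<phi> :: "('f, 'r) form" and F :: "'f \<Rightarrow> 'u list \<Rightarrow> 'u" and R :: "'r \<Rightarrow> 'u list \<Rightarrow> bool"
  assumes "set ps \<subseteq> C" "fv \<phi> \<subseteq> {..<p + length ps}"
    "S = {v. length v = p \<and> sat F R (\<lambda>i. (v @ ps) ! i) \<phi>}"
  shows "S \<in> defsets F R p C"
  using assms unfolding defsets_def by blast

lemma defsets_mono: "C \<subseteq> C' \<Longrightarrow> S \<in> defsets F R p C \<Longrightarrow> S \<in> defsets F R p C'"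
  unfolding defsets_def by blast

lemma defsets_subset: "S \<in> defsets F R p C \<Longrightarrow> S \<subseteq> tuples p"
  unfolding defsets_def by blast

lemma defsets_subset_Pow: "defsets F R p C \<subseteq> Pow (tuples p)"
  using defsets_subset by blast

lemma tuples_in_defsets: "tuples p \<in> defsets F R p C"
  by (rule defsetsI[where ps = "[]" and \<phi> = "Neg Bot"]) auto

lemma defsets_Diff:
  fixes F :: "'f \<Rightarrow> 'u list \<Rightarrow> 'u" and R :: "'r \<Rightarrow> 'u list \<Rightarrow> bool"
  assumes "S \<in> defsets F R p C" shows "tuples p - S \<in> defsets F R p C"
proof -
  obtain \<phi> :: "('f, 'r) form" and ps where h: "set ps \<subseteq> C" "fv \<phi> \<subseteq> {..<p + length ps}"
    "S = {v. length v = p \<and> sat F R (\<lambda>i. (v @ ps) ! i) \<phi>}" using assms by (rule defsetsE)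
  show ?thesis by (rule defsetsI[where ps = ps and \<phi> = "Neg \<phi>"]) (use h in auto)
qed

lemma defsets_Int:
  fixes F :: "'f \<Rightarrow> 'u list \<Rightarrow> 'u" and R :: "'r \<Rightarrow> 'u list \<Rightarrow> bool"
  assumes "S1 \<in> defsets F R p C" "S2 \<in> defsets F R p C" shows "S1 \<inter> S2 \<in> defsets F R p C"
proof -
  obtain \<phi>1 :: "('f, 'r) form" and ps1 where h1: "set ps1 \<subseteq> C" "fv \<phi>1 \<subseteq> {..<p + length ps1}"
    "S1 = {v. length v = p \<and> sat F R (\<lambda>i. (v @ ps1) ! i) \<phi>1}" using assms(1) by (rule defsetsE)
  obtain \<phi>2 :: "('f, 'r) form" and ps2 where h2: "set ps2 \<subseteq> C" "fv \<phi>2 \<subseteq> {..<p + length ps2}"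
    "S2 = {v. length v = p \<and> sat F R (\<lambda>i. (v @ ps2) ! i) \<phi>2}" using assms(2) by (rule defsetsE)
  define \<rho> where "\<rho> = (\<lambda>i. if i < p then i else i + length ps1)"
  show ?thesis
  proof (rule defsetsI[where ps = "ps1 @ ps2" and \<phi> = "Conj \<phi>1 (rename_form \<rho> \<phi>2)"])
    show "set (ps1 @ ps2) \<subseteq> C" using h1 h2 by simp
    have "fv (rename_form \<rho> \<phi>2) \<subseteq> \<rho> ` fv \<phi>2" by (rule fv_rename_form)
    also have "\<dots> \<subseteq> {..<p + length (ps1 @ ps2)}" using h2(2) by (auto simp: \<rho>_def)
    finally show "fv (Conj \<phi>1 (rename_form \<rho> \<phi>2)) \<subseteq> {..<p + length (ps1 @ ps2)}" using h1(2) by auto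
    have e1: "sat F R (\<lambda>i. (v @ ps1 @ ps2) ! i) \<phi>1 = sat F R (\<lambda>i. (v @ ps1) ! i) \<phi>1" if "length v = p" for v
      by (rule sat_cong) (use h1(2) that in \<open>auto simp: nth_append\<close>)
    have e2: "sat F R (\<lambda>i. (v @ ps1 @ ps2) ! i) (rename_form \<rho> \<phi>2) = sat F R (\<lambda>i. (v @ ps2) ! i) \<phi>2" if "length v = p" for v
      by (rule sat_rename_form_eq) (use h2(2) that in \<open>auto simp: nth_append \<rho>_def\<close>)
    show "S1 \<inter> S2 = {v. length v = p \<and> sat F R (\<lambda>i. (v @ ps1 @ ps2) ! i) (Conj \<phi>1 (rename_form \<rho> \<phi>2))}"
      using e1 e2 h1(3) h2(3) by auto
  qed
qed

lemma defsets_reindex: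
  fixes F :: "'f \<Rightarrow> 'u list \<Rightarrow> 'u" and R :: "'r \<Rightarrow> 'u list \<Rightarrow> bool"
  assumes "S \<in> defsets F R p C" "\<forall>j<p. \<sigma> j < q"
  shows "{w \<in> tuples q. map (\<lambda>j. w ! \<sigma> j) [0..<p] \<in> S} \<in> defsets F R q C"
proof -
  obtain \<phi> :: "('f, 'r) form" and ps where h: "set ps \<subseteq> C" "fv \<phi> \<subseteq> {..<p + length ps}"
    "S = {v. length v = p \<and> sat F R (\<lambda>i. (v @ ps) ! i) \<phi>}" using assms(1) by (rule defsetsE)
  define \<rho> where "\<rho> = (\<lambda>j. if j < p then \<sigma> j else q + (j - p))"
  show ?thesis
  proof (rule defsetsI[where ps = ps and \<phi> = "rename_form \<rho> \<phi>"])
    show "set ps \<subseteq> C" by (rule h(1))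
    have "fv (rename_form \<rho> \<phi>) \<subseteq> \<rho> ` fv \<phi>" by (rule fv_rename_form)
    also have "\<dots> \<subseteq> {..<q + length ps}" using h(2) assms(2) by (auto simp: \<rho>_def)
    finally show "fv (rename_form \<rho> \<phi>) \<subseteq> {..<q + length ps}" .
    have e: "sat F R (\<lambda>i. (w @ ps) ! i) (rename_form \<rho> \<phi>) = sat F R (\<lambda>i. (map (\<lambda>j. w ! \<sigma> j) [0..<p] @ ps) ! i) \<phi>"
      if "length w = q" for w
      by (rule sat_rename_form_eq) (use h(2) that assms(2) in \<open>auto simp: nth_append \<rho>_def\<close>)
    show "{w \<in> tuples q. map (\<lambda>j. w ! \<sigma> j) [0..<p] \<in> S} =
        {w. length w = q \<and> sat F R (\<lambda>i. (w @ ps) ! i) (rename_form \<rho> \<phi>)}"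
      using e h(3) by auto
  qed
qed

lemma defsets_project_last:
  fixes F :: "'f \<Rightarrow> 'u list \<Rightarrow> 'u" and R :: "'r \<Rightarrow> 'u list \<Rightarrow> bool"
  assumes "S \<in> defsets F R (Suc p) C"
  shows "{u \<in> tuples p. \<exists>a. u @ [a] \<in> S} \<in> defsets F R p C"
proof -
  obtain \<phi> :: "('f, 'r) form" and ps where h: "set ps \<subseteq> C" "fv \<phi> \<subseteq> {..<Suc p + length ps}"
    "S = {v. length v = Suc p \<and> sat F R (\<lambda>i. (v @ ps) ! i) \<phi>}" using assms(1) by (rule defsetsE)
  define l where "l = length ps"
  define \<rho> where "\<rho> = (\<lambda>j. if j < p then j else if j = p then p + l else j - 1)"
  show ?thesis
  proof (rule defsetsI[where ps = ps and \<phi> = "Exi (p + l) (rename_form \<rho> \<phi>)"])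
    show "set ps \<subseteq> C" by (rule h(1))
    have "fv (rename_form \<rho> \<phi>) \<subseteq> \<rho> ` fv \<phi>" by (rule fv_rename_form)
    also have "\<dots> \<subseteq> {..<p + l} \<union> {p + l}" using h(2) by (auto simp: \<rho>_def l_def)
    finally show "fv (Exi (p + l) (rename_form \<rho> \<phi>)) \<subseteq> {..<p + length ps}" by (auto simp: l_def)
    have e: "sat F R ((\<lambda>i. (u @ ps) ! i)(p + l := a)) (rename_form \<rho> \<phi>) = sat F R (\<lambda>i. ((u @ [a]) @ ps) ! i) \<phi>"
      if "length u = p" for u a
      by (rule sat_rename_form_eq) (use h(2) that in \<open>auto simp: nth_append \<rho>_def l_def\<close>)
    show "{u \<in> tuples p. \<exists>a. u @ [a] \<in> S} =
        {u. length u = p \<and> sat F R (\<lambda>i. (u @ ps) ! i) (Exi (p + l) (rename_form \<rho> \<phi>))}"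
      using e h(3) by auto
  qed
qed

lemma defsets_project:
  assumes "S \<in> defsets F R (p + r) C"
  shows "{u \<in> tuples p. \<exists>w. length w = r \<and> u @ w \<in> S} \<in> defsets F R p C"
  using assms
proof (induction r arbitrary: S)
  case 0
  then have "{u \<in> tuples p. \<exists>w. length w = 0 \<and> u @ w \<in> S} = S"
    using defsets_subset[of S F R "p + 0" C] by auto
  then show ?case
    using 0 by simp
next
  case (Suc r)
  let ?T = "{u \<in> tuples (p + r). \<exists>a. u @ [a] \<in> S}"
  have "?T \<in> defsets F R (p + r) C"
    using Suc.prems by (intro defsets_project_last) simp
  then have "{u \<in> tuples p. \<exists>w. length w = r \<and> u @ w \<in> ?T} \<in> defsets F R p C"
    by (rule Suc.IH)
  moreover have "(\<exists>w. length w = r \<and> u @ w \<in> ?T) \<longleftrightarrow> (\<exists>w. length w = Suc r \<and> u @ w \<in> S)"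
    if "length u = p" for u
  proof
    assume "\<exists>w. length w = r \<and> u @ w \<in> ?T"
    then obtain w a where "length w = r" "(u @ w) @ [a] \<in> S"
      by auto
    then show "\<exists>w. length w = Suc r \<and> u @ w \<in> S"
      by (intro exI[of _ "w @ [a]"]) simp
  next
    assume "\<exists>w. length w = Suc r \<and> u @ w \<in> S"
    then obtain w a where "length w = r" "u @ (w @ [a]) \<in> S"
      by (metis length_Suc_conv_rev)
    then show "\<exists>w. length w = r \<and> u @ w \<in> ?T"
      using that by (intro exI[of _ w]) auto
  qed
  ultimately show ?case
    by (simp cong: conj_cong)
qed

lemma algebra_defsets: "algebra (tuples p) (defsets F R p C)"
  unfolding algebra_iff_Un
proof (intro conjI ballI)
  show "defsets F R p C \<subseteq> Pow (tuples p)"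
    using defsets_subset by blast
  have "{} = tuples p - tuples p"
    by simp
  then show "{} \<in> defsets F R p C"
    using defsets_Diff[OF tuples_in_defsets] by metis
next
  fix a b assume a: "a \<in> defsets F R p C" and b: "b \<in> defsets F R p C"
  show "tuples p - a \<in> defsets F R p C"
    using a by (rule defsets_Diff)
  have "a \<union> b = tuples p - ((tuples p - a) \<inter> (tuples p - b))"
    using defsets_subset[OF a] defsets_subset[OF b] by blast
  then show "a \<union> b \<in> defsets F R p C"
    using defsets_Diff defsets_Int a b by metis
qed

lemma cylinder_x_eq:
  assumes "D \<subseteq> tuples n"
  shows "{v @ w | v w. v \<in> D \<and> length w = k} = {x \<in> tuples (n + k). take n x \<in> D}"
proof (intro equalityI subsetI)
  fix x assume "x \<in> {v @ w | v w. v \<in> D \<and> length w = k}"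
  then show "x \<in> {x \<in> tuples (n + k). take n x \<in> D}"
    using assms by auto
next
  fix x assume "x \<in> {x \<in> tuples (n + k). take n x \<in> D}"
  then show "x \<in> {v @ w | v w. v \<in> D \<and> length w = k}"
    by (intro CollectI exI[of _ "take n x"] exI[of _ "drop n x"]) auto
qed

lemma cylinder_y_eq:
  assumes "E \<subseteq> tuples m"
  shows "{v @ w | v w. length v = n \<and> w \<in> E} = {x \<in> tuples (n + m). drop n x \<in> E}"
proof (intro equalityI subsetI)
  fix x assume "x \<in> {v @ w | v w. length v = n \<and> w \<in> E}"
  then show "x \<in> {x \<in> tuples (n + m). drop n x \<in> E}"
    using assms by auto
next
  fix x assume "x \<in> {x \<in> tuples (n + m). drop n x \<in> E}"
  then show "x \<in> {v @ w | v w. length v = n \<and> w \<in> E}"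
    by (intro CollectI exI[of _ "take n x"] exI[of _ "drop n x"]) auto
qed

lemma defsets_cylinder_x:
  assumes "D \<in> defsets F R n C"
  shows "{v @ w | v w. v \<in> D \<and> length w = k} \<in> defsets F R (n + k) C"
proof -
  have "map (\<lambda>j. x ! j) [0..<n] = take n x" if "x \<in> tuples (n + k)" for x :: "'a list"
    using that by (intro nth_equalityI) auto
  then have "{x \<in> tuples (n + k). take n x \<in> D} = {x \<in> tuples (n + k). map (\<lambda>j. x ! j) [0..<n] \<in> D}"
    by auto
  then show ?thesis
    using defsets_reindex[OF assms, of id "n + k"] cylinder_x_eq[OF defsets_subset[OF assms]] by simp
qed

lemma defsets_cylinder_y:
  assumes "E \<in> defsets F R m C"
  shows "{v @ w | v w. length v = n \<and> w \<in> E} \<in> defsets F R (n + m) C"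
proof -
  have "map (\<lambda>j. x ! (n + j)) [0..<m] = drop n x" if "x \<in> tuples (n + m)" for x :: "'a list"
    using that by (intro nth_equalityI) auto
  then have "{x \<in> tuples (n + m). drop n x \<in> E} = {x \<in> tuples (n + m). map (\<lambda>j. x ! (n + j)) [0..<m] \<in> E}"
    by auto
  then show ?thesis
    using defsets_reindex[OF assms, of "\<lambda>j. n + j" "n + m"] cylinder_y_eq[OF defsets_subset[OF assms]] by simp
qed

definition definable_over :: "('f \<Rightarrow> 'u list \<Rightarrow> 'u) \<Rightarrow> ('r \<Rightarrow> 'u list \<Rightarrow> bool) \<Rightarrow> nat \<Rightarrow> nat
    \<Rightarrow> 'u set \<Rightarrow> ('u list \<Rightarrow> 'u list) \<Rightarrow> bool" where
  "definable_over F R k m C f \<longleftrightarrow>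
     (\<forall>v. length v = k \<longrightarrow> length (f v) = m) \<and>
     {v @ w | v w. length v = k \<and> w = f v} \<in> defsets F R (k + m) C"

text \<open>On \<open>(n + k)\<close>-tuples, \<open>map_suffix n f\<close> is the map \<open>id \<times> f\<close>, \<open>(x, y) \<mapsto> (x, f y)\<close>.\<close>

definition map_suffix :: "nat \<Rightarrow> ('a list \<Rightarrow> 'a list) \<Rightarrow> 'a list \<Rightarrow> 'a list" where
  "map_suffix n f v = take n v @ f (drop n v)"

lemma definable_over_mono:
  "C \<subseteq> C' \<Longrightarrow> definable_over F R k m C f \<Longrightarrow> definable_over F R k m C' f"
  unfolding definable_over_def using defsets_mono by blast

lemma definable_map_finite_parameters:
  fixes F :: "'f \<Rightarrow> 'u list \<Rightarrow> 'u" and R :: "'r \<Rightarrow> 'u list \<Rightarrow> bool"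
  assumes "definable_map F R k m f"
  obtains P where "finite P" "definable_over F R k m P f"
proof -
  let ?G = "{v @ w | v w. length v = k \<and> w = f v}"
  have lengths: "\<forall>v. length v = k \<longrightarrow> length (f v) = m" and G: "?G \<in> defsets F R (k + m) UNIV"
    using assms unfolding definable_map_def by blast+
  from G obtain \<phi> :: "('f, 'r) form" and ps where "set ps \<subseteq> UNIV" "fv \<phi> \<subseteq> {..<(k + m) + length ps}"
    "?G = {v. length v = k + m \<and> sat F R (\<lambda>i. (v @ ps) ! i) \<phi>}"
    by (rule defsetsE)
  then have "?G \<in> defsets F R (k + m) (set ps)"
    by (intro defsetsI[OF order_refl])
  with lengths have "definable_over F R k m (set ps) f"
    unfolding definable_over_def by blast
  then show ?thesis
    by (intro that[of "set ps"] finite_set)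
qed

lemma append_in_graph_iff:
  assumes "length w = k"
  shows "w @ z \<in> {v @ u | v u. length v = k \<and> u = f v} \<longleftrightarrow> z = f w"
  using assms by (auto simp: append_eq_append_conv)

lemma append_in_cylinder_y_iff:
  assumes "length w = k"
  shows "w @ z \<in> {v @ u | v u. length v = k \<and> u \<in> E} \<longleftrightarrow> z \<in> E"
  using assms by (auto simp: append_eq_append_conv)

lemma defsets_vimage:
  assumes f: "definable_over F R k m C f" and E: "E \<in> defsets F R m C"
  shows "{w \<in> tuples k. f w \<in> E} \<in> defsets F R k C"
proof -
  define P where "P = {v @ u | v u. length v = k \<and> u = f v} \<inter> {v @ u | v u. length v = k \<and> u \<in> E}"
  have "P \<in> defsets F R (k + m) C"
    unfolding P_def using f E by (intro defsets_Int defsets_cylinder_y) (simp_all add: definable_over_def)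
  then have "{w \<in> tuples k. \<exists>z. length z = m \<and> w @ z \<in> P} \<in> defsets F R k C"
    by (rule defsets_project)
  moreover have "w @ z \<in> P \<longleftrightarrow> z = f w \<and> z \<in> E" if "length w = k" for w z
    unfolding P_def by (simp only: Int_iff append_in_graph_iff[OF that] append_in_cylinder_y_iff[OF that])
  moreover have "\<forall>v. length v = k \<longrightarrow> length (f v) = m"
    using f by (simp add: definable_over_def)
  ultimately show ?thesis
    by (smt (verit) Collect_cong mem_Collect_eq)
qed

lemma image_map_suffix_eq:
  assumes f: "\<forall>v. length v = k \<longrightarrow> length (f v) = m" and a: "a \<subseteq> tuples (n + k)"
  shows "map_suffix n f ` a = {y \<in> tuples (n + m). \<exists>w. length w = k \<and> take n y @ w \<in> a \<and> drop n y = f w}"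
proof (intro equalityI subsetI)
  fix y assume "y \<in> map_suffix n f ` a"
  then obtain x where x: "x \<in> a" "y = map_suffix n f x"
    by blast
  then have "length x = n + k"
    using a by blast
  then show "y \<in> {y \<in> tuples (n + m). \<exists>w. length w = k \<and> take n y @ w \<in> a \<and> drop n y = f w}"
    using x f by (intro CollectI conjI exI[of _ "drop n x"]) (auto simp: map_suffix_def)
next
  fix y assume "y \<in> {y \<in> tuples (n + m). \<exists>w. length w = k \<and> take n y @ w \<in> a \<and> drop n y = f w}"
  then obtain w where "length y = n + m" "length w = k" "take n y @ w \<in> a" "drop n y = f w"
    by blast
  then have "y = map_suffix n f (take n y @ w)"
    by (simp add: map_suffix_def) (metis append_take_drop_id)
  then show "y \<in> map_suffix n f ` a"
    using \<open>take n y @ w \<in> a\<close> by blast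
qed

lemma defsets_image_map_suffix:
  assumes f: "definable_over F R k m C f" and a: "a \<in> defsets F R (n + k) C"
  shows "map_suffix n f ` a \<in> defsets F R (n + m) C"
proof -
  let ?G = "{v @ u | v u. length v = k \<and> u = f v}"
  have G: "?G \<in> defsets F R (k + m) C"
    using f by (simp add: definable_over_def)
  define s1 where "s1 j = (if j < n then j else m + j)" for j
  define s2 where "s2 j = (if j < k then n + m + j else n + (j - k))" for j
  have s: "map (\<lambda>j. (y @ w) ! s1 j) [0..<n + k] = take n y @ w"
      "map (\<lambda>j. (y @ w) ! s2 j) [0..<k + m] = w @ drop n y"
    if "length y = n + m" "length w = k" for y w
    by (rule nth_equalityI; use that in \<open>auto simp: nth_append s1_def s2_def\<close>)+
  define P where "P = {x \<in> tuples ((n + m) + k). map (\<lambda>j. x ! s1 j) [0..<n + k] \<in> a} \<inter>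
    {x \<in> tuples ((n + m) + k). map (\<lambda>j. x ! s2 j) [0..<k + m] \<in> ?G}"
  have "P \<in> defsets F R ((n + m) + k) C"
    unfolding P_def by (intro defsets_Int defsets_reindex[OF a] defsets_reindex[OF G]) (auto simp: s1_def s2_def)
  then have "{y \<in> tuples (n + m). \<exists>w. length w = k \<and> y @ w \<in> P} \<in> defsets F R (n + m) C"
    by (rule defsets_project)
  moreover have P: "y @ w \<in> P \<longleftrightarrow> take n y @ w \<in> a \<and> drop n y = f w"
    if "length y = n + m" "length w = k" for y w
    using that s[OF that] append_in_graph_iff[of w k "drop n y" f] by (simp add: P_def)
  then have "{y \<in> tuples (n + m). \<exists>w. length w = k \<and> y @ w \<in> P}
      = {y \<in> tuples (n + m). \<exists>w. length w = k \<and> take n y @ w \<in> a \<and> drop n y = f w}"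
    by auto
  moreover have "\<forall>v. length v = k \<longrightarrow> length (f v) = m"
    using f by (simp add: definable_over_def)
  ultimately show ?thesis
    using image_map_suffix_eq[OF _ defsets_subset[OF a], of f m] by simp
qed

section \<open>Keisler measures and the map \<open>id \<times> f\<close>\<close>

lemma keisler_imp_prob_charge:
  "keisler F R p C \<mu> \<Longrightarrow> prob_charge (tuples p) (defsets F R p C) \<mu>"
  by (simp add: keisler_def prob_charge_def additive_def)

lemma keisler_restr:
  assumes "prob_charge (tuples p) M \<mu>" "defsets F R p C \<subseteq> M"
  shows "keisler F R p C (restr F R p C \<mu>)"
proof -
  have "prob_charge (tuples p) (defsets F R p C) \<mu>"
    using assms tuples_in_defsets by (rule prob_charge_subalgebra)
  moreover have "D \<union> E \<in> defsets F R p C" if "D \<in> defsets F R p C" "E \<in> defsets F R p C" for D E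
    using algebra_defsets[unfolded algebra_iff_Un] that by blast
  ultimately show ?thesis
    using tuples_in_defsets by (auto simp: keisler_def restr_def prob_charge_def additive_def)
qed

lemma restr_eq_keisler_iff:
  "keisler F R p C lam \<Longrightarrow> restr F R p C \<mu> = lam \<longleftrightarrow> (\<forall>D\<in>defsets F R p C. \<mu> D = lam D)"
  by (auto simp: keisler_def restr_def fun_eq_iff)

lemma restr_restr:
  "C \<subseteq> C' \<Longrightarrow> restr F R p C (restr F R p C' \<mu>) = restr F R p C \<mu>"
  using defsets_mono by (fastforce simp: restr_def)

lemma proj_x_restr:
  "C \<subseteq> C' \<Longrightarrow> proj_x F R n k C (restr F R (n + k) C' \<omega>) = proj_x F R n k C \<omega>"
  using defsets_mono defsets_cylinder_x by (fastforce simp: proj_x_def restr_def)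

lemma proj_y_restr:
  "C \<subseteq> C' \<Longrightarrow> proj_y F R n k C (restr F R (n + k) C' \<omega>) = proj_y F R n k C \<omega>"
  using defsets_mono defsets_cylinder_y by (fastforce simp: proj_y_def restr_def)

lemma proj_x_restrict_parameters:
  "C \<subseteq> C' \<Longrightarrow> proj_x F R n k C \<omega> = restr F R n C (proj_x F R n k C' \<omega>)"
  using defsets_mono by (fastforce simp: proj_x_def restr_def)

lemma map_suffix_simps:
  assumes "\<forall>v. length v = k \<longrightarrow> length (f v) = m" "length x = n + k"
  shows "length (map_suffix n f x) = n + m" "take n (map_suffix n f x) = take n x"
    "drop n (map_suffix n f x) = f (drop n x)"
  using assms by (simp_all add: map_suffix_def)

lemma vimage_map_suffix_cylinder_x:
  assumes "\<forall>v. length v = k \<longrightarrow> length (f v) = m" "D \<subseteq> tuples n"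
  shows "map_suffix n f -` {v @ w | v w. v \<in> D \<and> length w = m} \<inter> tuples (n + k)
    = {v @ w | v w. v \<in> D \<and> length w = k}"
  using assms by (auto simp: cylinder_x_eq map_suffix_def)

lemma vimage_map_suffix_cylinder_y:
  assumes "\<forall>v. length v = k \<longrightarrow> length (f v) = m" "E \<subseteq> tuples m"
  shows "map_suffix n f -` {v @ w | v w. length v = n \<and> w \<in> E} \<inter> tuples (n + k)
    = {v @ w | v w. length v = n \<and> w \<in> {u. length u = k \<and> f u \<in> E}}"
proof -
  have "{u. length u = k \<and> f u \<in> E} \<subseteq> tuples k"
    by blast
  then show ?thesis
    unfolding cylinder_y_eq[OF assms(2)] cylinder_y_eq[OF \<open>_ \<subseteq> tuples k\<close>]
    using map_suffix_simps[OF assms(1)] by auto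
qed

lemma proj_x_map_suffix:
  assumes "\<forall>v. length v = k \<longrightarrow> length (f v) = m"
  shows "proj_x F R n m C (\<lambda>E. \<omega> (map_suffix n f -` E \<inter> tuples (n + k))) = proj_x F R n k C \<omega>"
proof
  fix D
  show "proj_x F R n m C (\<lambda>E. \<omega> (map_suffix n f -` E \<inter> tuples (n + k))) D = proj_x F R n k C \<omega> D"
  proof (cases "D \<in> defsets F R n C")
    case True
    then show ?thesis
      unfolding proj_x_def by (simp only: if_True vimage_map_suffix_cylinder_x[OF assms defsets_subset[OF True]])
  qed (simp add: proj_x_def)
qed

lemma proj_y_map_suffix:
  assumes f: "definable_over F R k m UNIV f"
  shows "proj_y F R n m UNIV (\<lambda>E. \<omega> (map_suffix n f -` E \<inter> tuples (n + k)))
    = push F R k m f (proj_y F R n k UNIV \<omega>)"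
proof
  fix E
  show "proj_y F R n m UNIV (\<lambda>E. \<omega> (map_suffix n f -` E \<inter> tuples (n + k))) E
    = push F R k m f (proj_y F R n k UNIV \<omega>) E"
  proof (cases "E \<in> defsets F R m UNIV")
    case True
    have "{u \<in> tuples k. f u \<in> E} \<in> defsets F R k UNIV"
      using f True by (rule defsets_vimage)
    then have "{u. length u = k \<and> f u \<in> E} \<in> defsets F R k UNIV"
      by simp
    moreover have "\<forall>v. length v = k \<longrightarrow> length (f v) = m"
      using f by (simp add: definable_over_def)
    ultimately show ?thesis
      unfolding proj_y_def push_def
      by (simp only: True if_True vimage_map_suffix_cylinder_y[OF _ defsets_subset[OF True]])
  qed (simp add: proj_y_def push_def)
qed

lemma keisler_le_of_proj_x:
  assumes lam: "keisler F R (n + k) A lam" and px: "proj_x F R n k A lam = restr F R n A \<mu>"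
    and mu: "keisler F R n UNIV \<mu>"
    and a: "a \<in> defsets F R (n + k) A" and D: "D \<in> defsets F R n UNIV" and sub: "a \<subseteq> take n -` D"
  shows "lam a \<le> \<mu> D"
proof -
  define a' where "a' = {u \<in> tuples n. \<exists>w. length w = k \<and> u @ w \<in> a}"
  have a': "a' \<in> defsets F R n A"
    unfolding a'_def using a by (rule defsets_project)
  have "a \<subseteq> {v @ w | v w. v \<in> a' \<and> length w = k}"
  proof
    fix x assume "x \<in> a"
    moreover have "length x = n + k"
      using defsets_subset[OF a] \<open>x \<in> a\<close> by blast
    ultimately have "take n x \<in> a'"
      unfolding a'_def by (intro CollectI conjI exI[of _ "drop n x"]) auto
    then show "x \<in> {v @ w | v w. v \<in> a' \<and> length w = k}"
      using \<open>length x = n + k\<close> by (intro CollectI exI[of _ "take n x"] exI[of _ "drop n x"]) auto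
  qed
  then have "lam a \<le> lam {v @ w | v w. v \<in> a' \<and> length w = k}"
    using algebra.prob_charge_mono[OF algebra_defsets keisler_imp_prob_charge[OF lam] a
        defsets_cylinder_x[OF a']] by blast
  also have "\<dots> = \<mu> a'"
    using fun_cong[OF px, of a'] a' by (simp add: proj_x_def restr_def)
  also have "\<dots> \<le> \<mu> D"
  proof (rule algebra.prob_charge_mono[OF algebra_defsets keisler_imp_prob_charge[OF mu] _ D])
    show "a' \<in> defsets F R n UNIV"
      using a' by (rule defsets_mono[rotated]) simp
    show "a' \<subseteq> D"
      using sub by (force simp: a'_def)
  qed
  finally show ?thesis .
qed

lemma charge_extending_witness:
  assumes lam: "keisler F R (n + k) A lam" and px: "proj_x F R n k A lam = restr F R n A \<mu>"
    and mu: "keisler F R n UNIV \<mu>"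
  obtains \<omega> where "prob_charge (tuples (n + k)) (Pow (tuples (n + k))) \<omega>"
    "restr F R (n + k) A \<omega> = lam" "proj_x F R n k UNIV \<omega> = \<mu>"
proof -
  have "take n \<in> tuples (n + k) \<rightarrow> tuples n"
    by auto
  with keisler_le_of_proj_x[OF lam px mu] obtain \<omega> where \<omega>:
    "prob_charge (tuples (n + k)) (Pow (tuples (n + k))) \<omega>" "\<forall>a\<in>defsets F R (n + k) A. \<omega> a = lam a"
    "\<forall>D\<in>defsets F R n UNIV. \<omega> (take n -` D \<inter> tuples (n + k)) = \<mu> D"
    using prob_charge_common_extension[OF algebra_defsets keisler_imp_prob_charge[OF lam]
        algebra_defsets keisler_imp_prob_charge[OF mu]] by blast
  have "proj_x F R n k UNIV \<omega> D = \<mu> D" for D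
  proof (cases "D \<in> defsets F R n UNIV")
    case True
    then have "{v @ w | v w. v \<in> D \<and> length w = k} = take n -` D \<inter> tuples (n + k)"
      using cylinder_x_eq[OF defsets_subset[OF True]] by auto
    then show ?thesis
      using True \<omega>(3) by (simp add: proj_x_def)
  qed (use mu in \<open>simp add: proj_x_def keisler_def\<close>)
  then show ?thesis
    using that \<omega>(1) restr_eq_keisler_iff[OF lam] \<omega>(2) by blast
qed

lemma keisler_le_of_pushforward:
  assumes lam: "keisler F R (n + k) A lam" and f: "definable_over F R k m B f" and "A \<subseteq> B"
    and \<omega>: "prob_charge (tuples (n + k)) (Pow (tuples (n + k))) \<omega>" "restr F R (n + k) A \<omega> = lam"
    and \<omega>': "keisler F R (n + m) UNIV \<omega>'"
    and agree: "restr F R (n + m) B \<omega>' = restr F R (n + m) B (\<lambda>E. \<omega> (map_suffix n f -` E \<inter> tuples (n + k)))"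
    and a: "a \<in> defsets F R (n + k) A" and D: "D \<in> defsets F R (n + m) UNIV"
    and sub: "a \<subseteq> map_suffix n f -` D"
  shows "lam a \<le> \<omega>' D"
proof -
  let ?b = "map_suffix n f ` a"
  have b: "?b \<in> defsets F R (n + m) B"
    using f defsets_mono[OF \<open>A \<subseteq> B\<close> a] by (rule defsets_image_map_suffix)
  have "lam a = \<omega> a"
    using \<omega>(2) a by (auto simp: restr_def)
  also have "\<dots> \<le> \<omega> (map_suffix n f -` ?b \<inter> tuples (n + k))"
    using defsets_subset[OF a] by (intro algebra.prob_charge_mono[OF algebra_Pow \<omega>(1)]) auto
  also have "\<dots> = \<omega>' ?b"
    using fun_cong[OF agree, of ?b] b by (simp add: restr_def)
  also have "\<dots> \<le> \<omega>' D"
    using sub defsets_mono[OF _ b] D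
    by (intro algebra.prob_charge_mono[OF algebra_defsets keisler_imp_prob_charge[OF \<omega>']]) auto
  finally show ?thesis .
qed

lemma charge_lifting_along_map_suffix:
  assumes lam: "keisler F R (n + k) A lam" and f: "definable_over F R k m B f" and "A \<subseteq> B"
    and \<omega>: "prob_charge (tuples (n + k)) (Pow (tuples (n + k))) \<omega>" "restr F R (n + k) A \<omega> = lam"
    and \<omega>': "keisler F R (n + m) UNIV \<omega>'"
    and agree: "restr F R (n + m) B \<omega>' = restr F R (n + m) B (\<lambda>E. \<omega> (map_suffix n f -` E \<inter> tuples (n + k)))"
  obtains \<omega>1 where "prob_charge (tuples (n + k)) (Pow (tuples (n + k))) \<omega>1" "restr F R (n + k) A \<omega>1 = lam"
    "restr F R (n + m) UNIV (\<lambda>E. \<omega>1 (map_suffix n f -` E \<inter> tuples (n + k))) = \<omega>'"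
proof -
  have "map_suffix n f \<in> tuples (n + k) \<rightarrow> tuples (n + m)"
    using f by (auto simp: definable_over_def map_suffix_def)
  with keisler_le_of_pushforward[OF assms] obtain \<omega>1 where \<omega>1:
    "prob_charge (tuples (n + k)) (Pow (tuples (n + k))) \<omega>1" "\<forall>a\<in>defsets F R (n + k) A. \<omega>1 a = lam a"
    "\<forall>D\<in>defsets F R (n + m) UNIV. \<omega>1 (map_suffix n f -` D \<inter> tuples (n + k)) = \<omega>' D"
    using prob_charge_common_extension[OF algebra_defsets keisler_imp_prob_charge[OF lam]
        algebra_defsets keisler_imp_prob_charge[OF \<omega>']] by blast
  then show ?thesis
    using that restr_eq_keisler_iff[OF lam] restr_eq_keisler_iff[OF \<omega>'] by blast
qed

lemma proj_y_of_lifting: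
  assumes ge: "\<And>\<omega>. keisler F R (n + k) UNIV \<omega> \<Longrightarrow> restr F R (n + k) A \<omega> = lam \<Longrightarrow>
      proj_x F R n k UNIV \<omega> = \<mu> \<Longrightarrow> proj_y F R n k UNIV \<omega> = \<nu>"
    and f: "definable_over F R k m UNIV f"
    and \<omega>1: "prob_charge (tuples (n + k)) (Pow (tuples (n + k))) \<omega>1" "restr F R (n + k) A \<omega>1 = lam"
    and \<omega>': "restr F R (n + m) UNIV (\<lambda>E. \<omega>1 (map_suffix n f -` E \<inter> tuples (n + k))) = \<omega>'"
      "proj_x F R n m UNIV \<omega>' = \<mu>"
  shows "proj_y F R n m UNIV \<omega>' = push F R k m f \<nu>"
proof -
  let ?\<omega> = "restr F R (n + k) UNIV \<omega>1"
  have lengths: "\<forall>v. length v = k \<longrightarrow> length (f v) = m"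
    using f by (simp add: definable_over_def)
  have "keisler F R (n + k) UNIV ?\<omega>"
    using \<omega>1(1) defsets_subset_Pow by (rule keisler_restr)
  moreover have "restr F R (n + k) A ?\<omega> = lam"
    using restr_restr[OF subset_UNIV] \<omega>1(2) by metis
  moreover have "proj_x F R n k UNIV ?\<omega> = \<mu>"
  proof -
    have "proj_x F R n k UNIV ?\<omega> = proj_x F R n k UNIV \<omega>1"
      by (rule proj_x_restr) simp
    also have "\<dots> = proj_x F R n m UNIV (\<lambda>E. \<omega>1 (map_suffix n f -` E \<inter> tuples (n + k)))"
      by (rule proj_x_map_suffix[OF lengths, symmetric])
    also have "\<dots> = proj_x F R n m UNIV \<omega>'"
      unfolding \<omega>'(1)[symmetric] by (rule proj_x_restr[symmetric]) simp
    finally show ?thesis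
      using \<omega>'(2) by simp
  qed
  ultimately have "proj_y F R n k UNIV ?\<omega> = \<nu>"
    by (rule ge)
  have "proj_y F R n m UNIV \<omega>' = proj_y F R n m UNIV (\<lambda>E. \<omega>1 (map_suffix n f -` E \<inter> tuples (n + k)))"
    unfolding \<omega>'(1)[symmetric] by (rule proj_y_restr) simp
  also have "\<dots> = push F R k m f (proj_y F R n k UNIV \<omega>1)"
    by (rule proj_y_map_suffix[OF f])
  also have "proj_y F R n k UNIV \<omega>1 = proj_y F R n k UNIV ?\<omega>"
    by (rule proj_y_restr[symmetric]) simp
  finally show ?thesis
    using \<open>proj_y F R n k UNIV ?\<omega> = \<nu>\<close> by simp
qed

lemma geE_A_push:
  assumes mu: "keisler F R n UNIV \<mu>" and f: "definable_over F R k m B f" and "A \<subseteq> B"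
    and ge: "geE_A F R n k A \<mu> \<nu>"
  shows "geE_A F R n m B \<mu> (push F R k m f \<nu>)"
proof -
  obtain lam where lam: "keisler F R (n + k) A lam" "proj_x F R n k A lam = restr F R n A \<mu>"
    and witness: "\<And>\<omega>. keisler F R (n + k) UNIV \<omega> \<Longrightarrow> restr F R (n + k) A \<omega> = lam \<Longrightarrow>
      proj_x F R n k UNIV \<omega> = \<mu> \<Longrightarrow> proj_y F R n k UNIV \<omega> = \<nu>"
    using ge unfolding geE_A_def by blast
  obtain \<omega>0 where \<omega>0: "prob_charge (tuples (n + k)) (Pow (tuples (n + k))) \<omega>0"
    "restr F R (n + k) A \<omega>0 = lam" "proj_x F R n k UNIV \<omega>0 = \<mu>"
    using charge_extending_witness[OF lam mu] .
  define lam' where "lam' = restr F R (n + m) B (\<lambda>E. \<omega>0 (map_suffix n f -` E \<inter> tuples (n + k)))"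
  have "map_suffix n f \<in> tuples (n + k) \<rightarrow> tuples (n + m)"
    using f by (auto simp: definable_over_def map_suffix_def)
  then have "keisler F R (n + m) B lam'"
    unfolding lam'_def using prob_charge_Pow_pushforward[OF \<omega>0(1)] defsets_subset_Pow by (blast intro: keisler_restr)
  moreover have "proj_x F R n m B lam' = restr F R n B \<mu>"
  proof -
    have "proj_x F R n m B lam' = proj_x F R n m B (\<lambda>E. \<omega>0 (map_suffix n f -` E \<inter> tuples (n + k)))"
      unfolding lam'_def by (rule proj_x_restr) simp
    also have "\<dots> = proj_x F R n k B \<omega>0"
      using f by (intro proj_x_map_suffix) (simp add: definable_over_def)
    also have "\<dots> = restr F R n B (proj_x F R n k UNIV \<omega>0)"
      by (rule proj_x_restrict_parameters) simp
    finally show ?thesis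
      using \<omega>0(3) by simp
  qed
  moreover have "proj_y F R n m UNIV \<omega>' = push F R k m f \<nu>"
    if \<omega>': "keisler F R (n + m) UNIV \<omega>'" "restr F R (n + m) B \<omega>' = lam'" "proj_x F R n m UNIV \<omega>' = \<mu>" for \<omega>'
  proof -
    obtain \<omega>1 where "prob_charge (tuples (n + k)) (Pow (tuples (n + k))) \<omega>1" "restr F R (n + k) A \<omega>1 = lam"
      "restr F R (n + m) UNIV (\<lambda>E. \<omega>1 (map_suffix n f -` E \<inter> tuples (n + k))) = \<omega>'"
      using charge_lifting_along_map_suffix[OF lam(1) f \<open>A \<subseteq> B\<close> \<omega>0(1,2) \<omega>'(1)] \<omega>'(2) lam'_def by blast
    then show ?thesis
      using proj_y_of_lifting[OF witness definable_over_mono[OF _ f]] \<omega>'(3) by blast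
  qed
  ultimately show ?thesis
    unfolding geE_A_def by blast
qed

lemma small_insert:
  assumes "infinite K" "small K A" shows "small K (insert x A)"
  unfolding small_def
proof
  assume "\<exists>g. inj_on g K \<and> g ` K \<subseteq> insert x A"
  then obtain g where g: "inj_on g K" "g ` K \<subseteq> insert x A"
    by blast
  define y where "y = (SOME u. u \<in> K \<and> g u = x)"
  have y: "u = y" if "u \<in> K" "g u = x" for u
  proof -
    have "y \<in> K" "g y = x"
      using someI[of "\<lambda>u. u \<in> K \<and> g u = x"] that by (auto simp: y_def)
    then show ?thesis
      using g(1) that by (auto dest: inj_onD)
  qed
  obtain h where "bij_betw h K (K - {y})"
    using infinite_imp_bij_betw[OF assms(1)] by blast
  then have h: "inj_on h K" "h ` K = K - {y}"
    by (simp_all add: bij_betw_def)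
  have "inj_on (g \<circ> h) K"
    using h g(1) by (intro comp_inj_on) (auto intro: inj_on_subset)
  moreover have "g (h u) \<in> A" if "u \<in> K" for u
  proof -
    have "h u \<in> K" "h u \<noteq> y"
      using h(2) that by blast+
    then show ?thesis
      using g(2) y by blast
  qed
  ultimately show False
    using assms(2) unfolding small_def by fastforce
qed

lemma small_Un_finite:
  assumes "infinite K" "small K A" "finite P" shows "small K (A \<union> P)"
  using assms(3)
proof (induction P rule: finite_induct)
  case empty then show ?case using assms(2) by simp
next
  case (insert x P)
  have "A \<union> insert x P = insert x (A \<union> P)" by blast
  then show ?case using small_insert[OF assms(1) insert.IH] by simp
qed

theorem corollary3p14:
  fixes K :: "'k set"
    and F :: "'f \<Rightarrow> 'u list \<Rightarrow> 'u" and R :: "'r \<Rightarrow> 'u list \<Rightarrow> bool"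
    and n k m :: nat
    and \<mu> \<nu> :: "'u list set \<Rightarrow> real"
    and f :: "'u list \<Rightarrow> 'u list"
  assumes "monster K F R"
    and "keisler F R n UNIV \<mu>"
    and "keisler F R k UNIV \<nu>"
    and "definable_map F R k m f"
    and "geE K F R n k \<mu> \<nu>"
  shows "geE K F R n m \<mu> (push F R k m f \<nu>)"
proof -
  obtain A where A: "small K A" "geE_A F R n k A \<mu> \<nu>"
    using assms(5) unfolding geE_def by blast
  obtain P where P: "finite P" "definable_over F R k m P f"
    using assms(4) by (rule definable_map_finite_parameters)
  have "small K (A \<union> P)"
    using assms(1) A(1) P(1) by (intro small_Un_finite) (simp_all add: monster_def)
  moreover have "geE_A F R n m (A \<union> P) \<mu> (push F R k m f \<nu>)"
    using assms(2) definable_over_mono[OF _ P(2)] A(2) by (intro geE_A_push) auto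
  ultimately show ?thesis
    unfolding geE_def by blast
qed

end
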